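(* Let $(\mathcal{X},\mathcal{F},\sigma)$ be a probability space with an $\alpha$-homogeneous atomic filtration, $0<\alpha\le1/2$, and let $f\in L^1(\mathcal{X})$ satisfy $\|S(f)\|_\infty<\infty$. Then \[ \mathbb{E}\exp(f-\mathbb{E}f)\le e^{\|S(f)\|_\infty^2/(4\alpha)}. \]
   Context: An atomic filtration on a probability space $(\mathcal{X},\mathcal{F},\sigma)$ is an increasing sequence of $\sigma$-algebras $\mathcal{F}_n\subset\mathcal{F}$, $n\ge0$, with $\mathcal{F}_0=\{\varnothing,\mathcal{X}\}$, $\mathcal{F}$ generated by the $\mathcal{F}_n$, and such that for each $n$ there is a countable collection $\mathcal{D}_n$ of disjoint sets ("cubes") with every set of $\mathcal{F}_n$ a union of sets of $\mathcal{D}_n$. Write $\mathcal{D}=\bigcup_n\mathcal{D}_n$, $|A|=\sigma(A)$, and for $Q\in\mathcal{D}_n$ let $\operatorname{ch}Q=\{R\in\mathcal{D}_{n+1}:R\subset Q\}$. The filtration is $\alpha$-homogeneous if $|Q'|\ge\alpha|Q|$ for every cube $Q$ and every $Q'\in\operatorname{ch}Q$. For $|A|>0$, $\langle f\rangle_A=|A|^{-1}\int_A f$; $\mathbb{E}f=\langle f\rangle_{\mathcal{X}}$. Let $\mathbf{E}_Q f=\langle f\rangle_Q\mathbf{1}_Q$, $\Delta_Q=\sum_{R\in\operatorname{ch}Q}\mathbf{E}_R-\mathbf{E}_Q$, and $S f=\bigl(\sum_{Q\in\mathcal{D}}|\Delta_Q f|^2\bigr)^{1/2}$. *)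

theory Defs
  imports "HOL-Probability.Probability"
begin

definition atomic_filtration ::
  "'a measure \<Rightarrow> (nat \<Rightarrow> 'a set set) \<Rightarrow> (nat \<Rightarrow> 'a set set) \<Rightarrow> bool" where
  "atomic_filtration M F D \<longleftrightarrow>
     (\<forall>n. sigma_algebra (space M) (F n) \<and> F n \<subseteq> sets M) \<and>
     (\<forall>n. F n \<subseteq> F (Suc n)) \<and>
     F 0 = {{}, space M} \<and>
     sets M = sigma_sets (space M) (\<Union>n. F n) \<and>
     (\<forall>n. countable (D n) \<and> disjoint (D n) \<and> D n \<subseteq> F n \<and>
          (\<forall>A\<in>F n. \<exists>C\<subseteq>D n. A = \<Union>C))"

definition cube_children :: "(nat \<Rightarrow> 'a set set) \<Rightarrow> nat \<Rightarrow> 'a set \<Rightarrow> 'a set set" where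
  "cube_children D n Q = {R \<in> D (Suc n). R \<subseteq> Q}"

definition homogeneous_filtration ::
  "'a measure \<Rightarrow> (nat \<Rightarrow> 'a set set) \<Rightarrow> real \<Rightarrow> bool" where
  "homogeneous_filtration M D \<alpha> \<longleftrightarrow>
     (\<forall>n. \<forall>Q\<in>D n. \<forall>Q'\<in>cube_children D n Q. measure M Q' \<ge> \<alpha> * measure M Q)"

text \<open>Average of f over A (convention: 0 if A is a null set; only used for |A|>0).\<close>
definition cube_avg :: "'a measure \<Rightarrow> 'a set \<Rightarrow> ('a \<Rightarrow> real) \<Rightarrow> real" where
  "cube_avg M A f = (if measure M A > 0 then (\<integral>x\<in>A. f x \<partial>M) / measure M A else 0)"

definition cube_E :: "'a measure \<Rightarrow> 'a set \<Rightarrow> ('a \<Rightarrow> real) \<Rightarrow> 'a \<Rightarrow> real" where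
  "cube_E M Q f x = cube_avg M Q f * indicator Q x"

definition cube_Delta ::
  "'a measure \<Rightarrow> (nat \<Rightarrow> 'a set set) \<Rightarrow> nat \<Rightarrow> 'a set \<Rightarrow> ('a \<Rightarrow> real) \<Rightarrow> 'a \<Rightarrow> real" where
  "cube_Delta M D n Q f x =
     (\<Sum>\<^sub>\<infinity>R\<in>cube_children D n Q. cube_E M R f x) - cube_E M Q f x"

definition square_fun_sq ::
  "'a measure \<Rightarrow> (nat \<Rightarrow> 'a set set) \<Rightarrow> ('a \<Rightarrow> real) \<Rightarrow> 'a \<Rightarrow> ennreal" where
  "square_fun_sq M D f x =
     (\<Sum>\<^sub>\<infinity>(n, Q)\<in>Sigma UNIV D. ennreal ((cube_Delta M D n Q f x)\<^sup>2))"

definition square_fun ::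
  "'a measure \<Rightarrow> (nat \<Rightarrow> 'a set set) \<Rightarrow> ('a \<Rightarrow> real) \<Rightarrow> 'a \<Rightarrow> ennreal" where
  "square_fun M D f x =
     (if square_fun_sq M D f x = \<top> then \<top>
      else ennreal (sqrt (enn2real (square_fun_sq M D f x))))"

end

theory Submission
  imports Defs
begin

(* Write E_n f for the average of f over the generation-n cube containing x and
   d_n = E_(n+1) f - E_n f.  Over a cube Q the values of d_n on the children R of Q have
   mean zero for the weights |R|/|Q|, all of which are at least alpha.  The elementary
   inequality  sum_R p_R exp (x_R - x_R^2/(4 alpha)) <= 1  for such weights and values
   therefore makes  G_N = exp (E_N f - E f - (1/(4 alpha)) sum_(n<N) d_n^2)  a
   supermartingale, so E G_N <= 1; since sum_n d_n^2 <= S(f)^2 this gives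
   E exp (E_N f - E f) <= exp (||S f||^2/(4 alpha)).  Homogeneity makes every generation
   finite and E_N f -> f in L^1 (exactly so for indicators of sets in some F_m, then by the
   pi-lambda theorem and density), so a subsequence converges almost everywhere and Fatou's
   lemma gives the theorem.

   The elementary inequality is reduced to the two-point case by balancing each negative
   value against a share of the nonnegative ones, which are merged into one point by a
   tangent-line bound.  Two points are handled by Taylor estimates when the negative point
   has mass at most 1/2 and by comparison with cosh otherwise. *)

lemma exp_minus_le_Taylor_odd:
  fixes x :: real
  assumes "0 \<le> x" "odd n"
  shows "exp (-x) \<le> (\<Sum>m<n. (-x) ^ m / fact m)"
proof -
  obtain t where t: "exp (-x) = (\<Sum>m<n. (-x) ^ m / fact m) + exp t / fact n * (-x) ^ n"
    using Maclaurin_exp_le[of "-x" n] by blast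
  have "exp t / fact n * (-x) ^ n \<le> 0"
    using assms by (simp add: power_minus_odd)
  with t show ?thesis by linarith
qed

lemma exp_minus_ge_Taylor_even:
  fixes x :: real
  assumes "even n"
  shows "(\<Sum>m<n. (-x) ^ m / fact m) \<le> exp (-x)"
proof -
  obtain t where t: "exp (-x) = (\<Sum>m<n. (-x) ^ m / fact m) + exp t / fact n * (-x) ^ n"
    using Maclaurin_exp_le[of "-x" n] by blast
  have "0 \<le> exp t / fact n * (-x) ^ n"
    using assms by (simp add: zero_le_even_power)
  with t show ?thesis by linarith
qed

lemma exp_minus_2u_le:
  fixes u :: real
  assumes "0 \<le> u" "u \<le> 1"
  shows "exp (-2*u) \<le> 1 - (2*u-u^2) + (2*u-u^2)^2/4 - (2*u-u^2)^3/24"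
proof -
  have "exp (-(2*u)) \<le> (\<Sum>m<7. (-(2*u)) ^ m / fact m)"
    using assms by (intro exp_minus_le_Taylor_odd) auto
  also have "\<dots> = 1 - (2*u) + (2*u)^2/2 - (2*u)^3/6 + (2*u)^4/24 - (2*u)^5/120 + (2*u)^6/720"
    by (simp add: eval_nat_numeral fact_numeral)
  finally have "exp (-2*u) \<le> 1 - (2*u) + (2*u)^2/2 - (2*u)^3/6 + (2*u)^4/24 - (2*u)^5/120 + (2*u)^6/720"
    by simp
  moreover have "1 - (2*u-u^2) + (2*u-u^2)^2/4 - (2*u-u^2)^3/24
      - (1 - (2*u) + (2*u)^2/2 - (2*u)^3/6 + (2*u)^4/24 - (2*u)^5/120 + (2*u)^6/720)
      = u^4 * (1/12 + u/60 - 17*u^2/360)"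
    by (simp add: field_simps power_def)
  moreover have "u^2 \<le> 1" using assms by (simp add: power_le_one)
  then have "0 \<le> u^4 * (1/12 + u/60 - 17*u^2/360)" using assms by simp
  ultimately show ?thesis by linarith
qed

lemma exp_minus_2u_ge:
  fixes u :: real
  assumes "0 \<le> u" "u^2 \<le> 1/2"
  shows "(1-u)^2*(1-2*u^2) + ((2*u-u^2)^2/2 - (2*u-u^2)^3/12)*(1 - u^2) \<le> exp (-2*u)"
proof -
  have u1: "u \<le> 1"
  proof (rule ccontr)
    assume "\<not> u \<le> 1"
    then have "1 < u^2" by (simp add: less_1_mult power2_eq_square)
    with assms show False by simp
  qed
  have "(\<Sum>m<6. (-(2*u)) ^ m / fact m) \<le> exp (-(2*u))"
    by (intro exp_minus_ge_Taylor_even) auto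
  moreover have "(\<Sum>m<6. (-(2*u)) ^ m / fact m) = 1 - (2*u) + (2*u)^2/2 - (2*u)^3/6 + (2*u)^4/24 - (2*u)^5/120"
    by (simp add: eval_nat_numeral fact_numeral)
  moreover have "(1 - (2*u) + (2*u)^2/2 - (2*u)^3/6 + (2*u)^4/24 - (2*u)^5/120)
     - ((1-u)^2*(1-2*u^2) + ((2*u-u^2)^2/2 - (2*u-u^2)^3/12)*(1 - u^2))
     = u^2 * ((1 - 4*u/3)^2 + u^2*(17/12*(u - 73/85)^2 + 5263/15300 - u^3/2 + u^4/12))"
    by (simp add: field_simps power_def)
  moreover have "u^3 \<le> 1/2"
  proof -
    have "u^3 = u * u^2" by (simp add: power_def)
    also have "\<dots> \<le> 1 * (1/2)" using assms u1 by (intro mult_mono) auto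
    finally show ?thesis by simp
  qed
  then have "0 \<le> 17/12*(u - 73/85)^2 + 5263/15300 - u^3/2 + u^4/12"
    using zero_le_power2[of "u - 73/85"] zero_le_power[OF assms(1), of 4] by linarith
  then have "0 \<le> u^2 * ((1 - 4*u/3)^2 + u^2*(17/12*(u - 73/85)^2 + 5263/15300 - u^3/2 + u^4/12))"
    by simp
  ultimately show ?thesis by simp
qed

lemma quadratic_nonneg_on_half_interval:
  fixes c0 c1 c2 p :: real
  assumes "0 \<le> c0" "0 \<le> c0 + c1/2 + c2/4" "c2 \<ge> 0 \<Longrightarrow> c1 + c2 \<le> 0" "0 \<le> p" "p \<le> 1/2"
  shows "0 \<le> c0 + c1*p + c2*p^2"
proof (cases "c2 \<ge> 0")
  case True
  have "c0 + c1*p + c2*p^2 = (c0 + c1/2 + c2/4) + (c1 + c2)*(p - 1/2) + c2*(p - 1/2)^2"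
    by (simp add: field_simps power_def)
  moreover have "0 \<le> (c1 + c2)*(p - 1/2)" using True assms by (intro mult_nonpos_nonpos) auto
  moreover have "0 \<le> c2*(p - 1/2)^2" using True by simp
  ultimately show ?thesis using assms(2) by linarith
next
  case False
  have "c0 + c1*p + c2*p^2 = (1 - 2*p)*c0 + 2*p*(c0 + c1/2 + c2/4) + c2*(p*(p - 1/2))"
    by (simp add: field_simps power_def)
  moreover have "0 \<le> c2*(p*(p - 1/2))"
    using False assms by (intro mult_nonpos_nonpos mult_nonneg_nonpos) auto
  ultimately show ?thesis using assms by simp
qed

lemma exp_minus_2u_quadratic_bound:
  fixes p u :: real
  assumes p: "0 \<le> p" "p \<le> 1/2" and u: "0 \<le> u" "u \<le> 1"
  shows "p * exp (-2*u) \<le> (p + (1-2*p)*u^2) * ((1-u)^2 + p * ((2*u-u^2)^2/2 - (2*u-u^2)^3/12))"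
proof -
  define v where "v = 2*u - u^2"
  define \<beta> where "\<beta> = v^2/2 - v^3/12"
  define E where "E = exp (-2*u)"
  have av: "(1-u)^2 = 1 - v" unfolding v_def by (simp add: power2_eq_square algebra_simps)
  have "u^2 \<le> u" using u by (simp add: power2_eq_square mult_left_le_one_le)
  then have v0: "0 \<le> v" unfolding v_def using u by simp
  have "v \<le> 1" using av by (metis diff_ge_0_iff_ge zero_le_power2)
  then have v32: "v^3 \<le> v^2" using power_decreasing[of 2 3 v] v0 by simp
  define c0 c1 c2 where "c0 = u^2*(1-v)" and "c1 = (1-v)*(1-2*u^2) + u^2*\<beta> - E"
    and "c2 = (1-2*u^2)*\<beta>"
  have "0 \<le> c0" unfolding c0_def using av by (metis mult_nonneg_nonneg zero_le_power2)
  moreover have "0 \<le> c0 + c1/2 + c2/4"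
  proof -
    have "c0 + c1/2 + c2/4 = (1 - v + v^2/4 - v^3/24)/2 - E/2"
      unfolding c0_def c1_def c2_def \<beta>_def by (simp add: field_simps power_def)
    moreover have "E \<le> 1 - v + v^2/4 - v^3/24" unfolding E_def v_def using exp_minus_2u_le[OF u] .
    ultimately show ?thesis by simp
  qed
  moreover have "c1 + c2 \<le> 0" if "c2 \<ge> 0"
  proof -
    have "u^2 \<le> 1/2"
    proof (rule ccontr)
      assume "\<not> u^2 \<le> 1/2"
      then have neg: "1 - 2*u^2 < 0" and "u \<noteq> 0" by auto
      then have "0 < v" unfolding v_def using u by (simp add: power2_eq_square)
      then have "0 < \<beta>" unfolding \<beta>_def using v32 zero_less_power[of v 2] by linarith
      with neg have "c2 < 0" unfolding c2_def by (simp add: mult_neg_pos)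
      with that show False by simp
    qed
    then have "(1-u)^2*(1-2*u^2) + \<beta>*(1-u^2) \<le> E"
      unfolding \<beta>_def E_def v_def using exp_minus_2u_ge[OF u(1)] by simp
    then show ?thesis unfolding c1_def c2_def av by (simp add: algebra_simps)
  qed
  ultimately have "0 \<le> c0 + c1*p + c2*p^2" using quadratic_nonneg_on_half_interval p by blast
  moreover have "(p + (1-2*p)*u^2) * ((1-u)^2 + p*\<beta>) - p*E = c0 + c1*p + c2*p^2"
    unfolding c0_def c1_def c2_def av by (simp add: field_simps power_def)
  ultimately show ?thesis unfolding \<beta>_def v_def E_def by simp
qed

lemma exp_minus_2u_sq_le:
  fixes p u :: real
  assumes p: "0 < p" "p \<le> 1/2" and u: "0 \<le> u" "u \<le> 1"
  shows "exp (-2*u - (1-2*p)/p * u^2) \<le> (1-u)^2 + p * ((2*u-u^2)^2/2 - (2*u-u^2)^3/12)"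
proof -
  define k where "k = (1-2*p)/p"
  have pk: "p * (1 + k*u^2) = p + (1-2*p)*u^2" unfolding k_def using p by (simp add: field_simps)
  have pos: "0 < p * (1 + k*u^2)" unfolding k_def using p by (simp add: add_pos_nonneg)
  have "(1 + k*u^2) * exp (-2*u - k*u^2) \<le> exp (k*u^2) * exp (-2*u - k*u^2)"
    by (intro mult_right_mono exp_ge_add_one_self) auto
  also have "\<dots> = exp (-2*u)" by (simp add: exp_add[symmetric])
  finally have "p * (1 + k*u^2) * exp (-2*u - k*u^2) \<le> p * exp (-2*u)"
    using p by (simp add: mult.assoc mult_left_mono)
  also have "\<dots> \<le> p * (1 + k*u^2) * ((1-u)^2 + p * ((2*u-u^2)^2/2 - (2*u-u^2)^3/12))"
    unfolding pk using exp_minus_2u_quadratic_bound p u by simp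
  finally show ?thesis unfolding k_def[symmetric] using pos by (rule mult_left_le_imp_le)
qed

lemma two_point_ineq_small:
  fixes p u :: real
  assumes p: "0 < p" "p \<le> 1/2" and u: "0 \<le> u" "u \<le> 1"
  shows "p * exp (-(2*(1-p)*u) - 1/(4*p) * (2*(1-p)*u)^2) + (1-p) * exp (2*p*u - 1/(4*p) * (2*p*u)^2) \<le> 1"
proof -
  define v where "v = 2*u - u^2"
  define k where "k = (1-2*p)/p"
  have av: "(1-u)^2 = 1 - v" unfolding v_def by (simp add: power2_eq_square algebra_simps)
  have "u^2 \<le> u" using u by (simp add: power2_eq_square mult_left_le_one_le)
  then have v0: "0 \<le> v" unfolding v_def using u by simp
  have "p^2 * v^3 = p * (p * v^3)" by (simp add: power2_eq_square)
  also have "\<dots> \<le> p * ((1/2) * v^3)" using p v0 by (intro mult_left_mono mult_right_mono) auto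
  finally have "p^2 * v^3 \<le> p * (v^3/2)" by simp
  then have "(1 - v) + p * (v^2/2 - v^3/12) \<le> 1 - v + p * v^2/2 - p^2 * v^3/6"
    by (simp add: right_diff_distrib)
  moreover have "exp (-2*u - k*u^2) \<le> (1 - v) + p * (v^2/2 - v^3/12)"
    using exp_minus_2u_sq_le[OF p u] unfolding k_def[symmetric] v_def[symmetric] av .
  ultimately have "p * exp (-2*u - k*u^2) \<le> p * (1 - v + p * v^2/2 - p^2 * v^3/6)"
    using p by (intro mult_left_mono) auto
  moreover have "(\<Sum>m<4. (-(p * v)) ^ m / fact m) \<le> exp (-(p * v))"
    by (rule exp_minus_ge_Taylor_even) simp
  moreover have "(\<Sum>m<4. (-(p * v)) ^ m / fact m) = 1 - p * v + (p * v)^2/2 - (p * v)^3/6"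
    by (simp add: eval_nat_numeral fact_numeral)
  ultimately have key: "(1-p) + p * exp (-2*u - k*u^2) \<le> exp (-(p * v))"
    by (simp add: field_simps power_def)
  have e1: "2*p*u - 1/(4*p) * (2*p*u)^2 = p * v"
    and e2: "-(2*(1-p)*u) - 1/(4*p) * (2*(1-p)*u)^2 = p * v + (-2*u - k*u^2)"
    unfolding v_def k_def using p by (simp_all add: field_simps power_def)
  have "p * exp (-(2*(1-p)*u) - 1/(4*p) * (2*(1-p)*u)^2) + (1-p) * exp (2*p*u - 1/(4*p) * (2*p*u)^2)
      = exp (p * v) * ((1-p) + p * exp (-2*u - k*u^2))"
    unfolding e1 e2 exp_add by (simp add: algebra_simps)
  also have "\<dots> \<le> exp (p * v) * exp (-(p * v))" using key by (intro mult_left_mono) auto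
  finally show ?thesis by (simp add: exp_minus)
qed

lemma exp_add_exp_minus_le:
  fixes y :: real
  assumes "0 \<le> y" "y \<le> 1"
  shows "exp y + exp (-y) \<le> 2 * exp (y^2/2)"
proof -
  have Taylor: "exp x \<le> (\<Sum>m<6. x ^ m / fact m) + 3 * x^6 / 720" if "\<bar>x\<bar> \<le> 1" for x :: real
  proof -
    obtain t where t: "\<bar>t\<bar> \<le> \<bar>x\<bar>" "exp x = (\<Sum>m<6. x ^ m / fact m) + exp t / fact 6 * x ^ 6"
      using Maclaurin_exp_le[of x 6] by blast
    have "exp t \<le> 3" using t(1) that exp_le by (meson abs_le_D1 exp_le_cancel_iff order.trans)
    then have "exp t / fact 6 * x ^ 6 \<le> 3 / fact 6 * x ^ 6"
      by (intro mult_right_mono divide_right_mono) auto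
    then show ?thesis using t by (simp add: fact_numeral)
  qed
  have "exp y + exp (-y) \<le> 2 + y^2 + y^4/12 + y^6/120"
    using Taylor[of y] Taylor[of "-y"] assms by (simp add: eval_nat_numeral fact_numeral)
  also have "\<dots> \<le> 2 * (1 + y^2/2 + (y^2/2)^2/2)"
  proof -
    have "2 * (1 + y^2/2 + (y^2/2)^2/2) = 2 + y^2 + y^4/4" by (simp add: field_simps power_def)
    moreover have "y^6 \<le> y^4" using power_decreasing[of 4 6 y] assms by simp
    ultimately show ?thesis using zero_le_power[OF assms(1), of 4] by linarith
  qed
  also have "\<dots> \<le> 2 * exp (y^2/2)"
    using exp_lower_Taylor_quadratic[of "y^2/2"] by (simp add: power2_eq_square)
  finally show ?thesis .
qed

lemma one_minus_exp_quotient_antimono: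
  fixes t y :: real
  assumes "0 < t" "t \<le> y"
  shows "t * (1 - exp (-y - y^2/2)) \<le> y * (1 - exp (-t - t^2/2))"
proof -
  define h where "h = (\<lambda>s::real. (1 - exp (-s - s^2/2)) / s)"
  have "h y \<le> h t"
  proof (rule DERIV_nonpos_imp_nonincreasing[OF assms(2)])
    fix x assume x: "t \<le> x" "x \<le> y"
    then have x0: "0 < x" using assms by simp
    let ?w = "x + x^2/2"
    have d: "(h has_real_derivative ((x*((1+x)*exp (-x - x^2/2)) - (1 - exp (-x - x^2/2))) / x^2)) (at x)"
      unfolding h_def using x0
      by (auto intro!: derivative_eq_intros simp: power2_eq_square field_simps)
    have "1 + x + x^2 \<le> exp ?w"
    proof -
      have "1 + ?w + ?w^2/2 \<le> exp ?w" using exp_lower_Taylor_quadratic[of ?w] x0 by simp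
      moreover have "x^2 \<le> ?w^2" using x0 by (intro power_mono) auto
      ultimately show ?thesis by simp
    qed
    then have "(1 + x + x^2) * exp (-?w) \<le> 1"
      by (metis exp_minus_inverse exp_gt_zero minus_diff_eq mult_right_mono less_le)
    then have "x*((1+x)*exp (-x - x^2/2)) - (1 - exp (-x - x^2/2)) \<le> 0"
      by (simp add: algebra_simps power2_eq_square)
    then have "((x*((1+x)*exp (-x - x^2/2)) - (1 - exp (-x - x^2/2))) / x^2) \<le> 0"
      by (intro divide_nonpos_pos) (use x0 in auto)
    with d show "\<exists>d. (h has_real_derivative d) (at x) \<and> d \<le> 0" by blast
  qed
  then show ?thesis unfolding h_def using assms by (simp add: field_simps)
qed

lemma two_point_ineq_large:
  fixes p y :: real
  assumes p: "1/2 \<le> p" "p < 1" and y: "0 \<le> y" "y \<le> 1"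
  shows "p * exp (-((1-p)*y/p) - 1/2 * ((1-p)*y/p)^2) + (1-p) * exp (y - 1/2 * y^2) \<le> 1"
proof (cases "y = 0")
  case False
  define t where "t = (1-p)*y/p"
  have y0: "0 < y" using False y by simp
  have pt: "(1-p) * y = p * t" unfolding t_def using p by simp
  have t0: "0 < t" unfolding t_def using p y0 by simp
  have "(1-p)*y \<le> p*y" using p y0 by (intro mult_right_mono) auto
  then have ty: "t \<le> y" unfolding pt using p y0 by simp
  have "(exp y + exp (-y)) * exp (-(y^2/2)) \<le> 2 * exp (y^2/2) * exp (-(y^2/2))"
    using exp_add_exp_minus_le[OF y] by (intro mult_right_mono) auto
  then have "exp (y - y^2/2) - 1 \<le> 1 - exp (-y - y^2/2)"
    by (simp add: algebra_simps exp_add[symmetric] exp_minus[symmetric])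
  then have "(1-p) * y * (exp (y - y^2/2) - 1) \<le> (1-p) * y * (1 - exp (-y - y^2/2))"
    using p y0 by (intro mult_left_mono) auto
  also have "\<dots> = p * (t * (1 - exp (-y - y^2/2)))" using pt by simp
  also have "\<dots> \<le> p * (y * (1 - exp (-t - t^2/2)))"
    using one_minus_exp_quotient_antimono[OF t0 ty] p by (intro mult_left_mono) auto
  finally have "y * ((1-p) * (exp (y - y^2/2) - 1)) \<le> y * (p * (1 - exp (-t - t^2/2)))"
    by (simp add: algebra_simps)
  then have "(1-p) * (exp (y - y^2/2) - 1) \<le> p * (1 - exp (-t - t^2/2))"
    using y0 by simp
  then show ?thesis unfolding t_def[symmetric] by (simp add: algebra_simps)
qed simp

lemma ln_one_plus_ge_pos:
  fixes u :: real
  assumes "0 \<le> u"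
  shows "u - u^2/2 \<le> ln (1 + u)"
proof -
  define f where "f = (\<lambda>s::real. ln (1 + s) - s + s^2/2)"
  have "f 0 \<le> f u"
  proof (rule DERIV_nonneg_imp_nondecreasing[OF assms])
    fix x :: real assume x: "0 \<le> x" "x \<le> u"
    have "(f has_real_derivative (1/(1+x) - 1 + x)) (at x)"
      unfolding f_def using x by (auto intro!: derivative_eq_intros simp: power2_eq_square)
    moreover have "1/(1+x) - 1 + x = x^2/(1+x)" using x by (simp add: field_simps power2_eq_square)
    ultimately show "\<exists>d. (f has_real_derivative d) (at x) \<and> 0 \<le> d" using x by auto
  qed
  then show ?thesis unfolding f_def by simp
qed

lemma ln_one_plus_ge_neg:
  fixes u :: real
  assumes "-1 < u" "u \<le> 0"
  shows "u - u^2/(2*(1+u)) \<le> ln (1 + u)"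
proof -
  define f where "f = (\<lambda>s::real. ln (1 + s) - s + s^2/(2*(1+s)))"
  have "f 0 \<le> f u"
  proof (rule DERIV_nonpos_imp_nonincreasing[OF assms(2)])
    fix x :: real assume x: "u \<le> x" "x \<le> 0"
    then have x1: "0 < 1 + x" using assms by simp
    have "(f has_real_derivative (1/(1+x) - 1 + (2*x*(2*(1+x)) - x^2*2)/(2*(1+x))^2)) (at x)"
      unfolding f_def using x1 by (auto intro!: derivative_eq_intros simp: power2_eq_square)
    moreover have "1/(1+x) - 1 + (2*x*(2*(1+x)) - x^2*2)/(2*(1+x))^2 = - (x^2/(2*(1+x)^2))"
    proof -
      define D where "D = 1 + x"
      have D0: "D \<noteq> 0" and xD: "x = D - 1" using x1 unfolding D_def by simp_all
      show ?thesis unfolding D_def[symmetric] unfolding xD using D0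
        by (simp add: field_simps power2_eq_square)
    qed
    ultimately show "\<exists>d. (f has_real_derivative d) (at x) \<and> d \<le> 0" by force
  qed
  then show ?thesis unfolding f_def by simp
qed

lemma exp_sub_sq_le_one_plus:
  fixes s h c :: real
  assumes s: "0 \<le> s" "s \<le> 1" and c: "1/2 \<le> c"
    and neg: "h < 0 \<Longrightarrow> s^2 \<le> 2*c*(1 + s*h)"
  shows "exp (s*h - c*h^2) \<le> 1 + s*h"
proof -
  have "s*h - c*h^2 \<le> ln (1 + s*h) \<and> 0 < 1 + s*h"
  proof (cases "0 \<le> h")
    case h: True
    have "(s*h)^2 \<le> 1 * h^2"
      using s h by (simp add: power_mult_distrib mult_left_le_one_le power_le_one)
    also have "\<dots> \<le> (2*c) * h^2" using c by (intro mult_right_mono) auto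
    finally have "s*h - c*h^2 \<le> s*h - (s*h)^2/2" by simp
    also have "\<dots> \<le> ln (1 + s*h)" using s h by (intro ln_one_plus_ge_pos) simp
    finally show ?thesis using s h by (simp add: add_pos_nonneg)
  next
    case h: False
    have ss: "s^2 \<le> 2*c*(1 + s*h)" using neg h by simp
    have pos: "0 < 1 + s*h"
    proof (cases "s = 0")
      case False
      then have "0 < 2*c*(1 + s*h)" using ss zero_less_power2[of s] by linarith
      then show ?thesis using c by (simp add: zero_less_mult_iff)
    qed simp
    have "(s*h)^2 \<le> (c*h^2) * (2*(1 + s*h))"
      using mult_right_mono[OF ss zero_le_power2[of h]] by (simp add: power_mult_distrib algebra_simps)
    then have "(s*h)^2/(2*(1 + s*h)) \<le> c*h^2" using pos by (simp add: divide_le_eq)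
    then have "s*h - c*h^2 \<le> s*h - (s*h)^2/(2*(1 + s*h))" by simp
    also have "\<dots> \<le> ln (1 + s*h)"
      using pos h s by (intro ln_one_plus_ge_neg) (auto simp: mult_nonneg_nonpos)
    finally show ?thesis using pos by simp
  qed
  then show ?thesis by (metis exp_le_cancel_iff exp_ln)
qed

lemma exp_quadratic_le_tangent:
  fixes c x y :: real
  assumes c: "1/2 \<le> c" and y: "0 \<le> y" "2*c*y \<le> 1" and x: "0 \<le> x"
  shows "exp (x - c*x^2) \<le> exp (y - c*y^2) * (1 + (1 - 2*c*y)*(x - y))"
proof -
  define s where "s = 1 - 2*c*y"
  have s: "0 \<le> s" "s \<le> 1" unfolding s_def using y c by auto
  have "exp (s*(x - y) - c*(x - y)^2) \<le> 1 + s*(x - y)"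
  proof (rule exp_sub_sq_le_one_plus[OF s c])
    have "2*c*(1 - s*y) - s^2 = 2*c - 1 + 2*c*y" unfolding s_def by (simp add: field_simps power2_eq_square)
    moreover have "0 \<le> 2*c*y" using c y by simp
    ultimately have "s^2 \<le> 2*c*(1 - s*y)" using c by linarith
    also have "\<dots> \<le> 2*c*(1 + s*(x - y))"
      using c s x by (intro mult_left_mono) (auto simp: algebra_simps)
    finally show "s^2 \<le> 2*c*(1 + s*(x - y))" .
  qed
  moreover have "x - c*x^2 = (y - c*y^2) + (s*(x - y) - c*(x - y)^2)"
    unfolding s_def by (simp add: field_simps power2_eq_square)
  ultimately show ?thesis unfolding s_def[symmetric] by (simp add: exp_add)
qed

lemma two_point_ineq:
  fixes p y :: real
  assumes p: "0 < p" "p < 1" and y: "0 \<le> y" "2 * max (1/2) (1/(4*p)) * y \<le> 1"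
  shows "p * exp (-((1-p)*y/p) - max (1/2) (1/(4*p)) * ((1-p)*y/p)^2)
         + (1-p) * exp (y - max (1/2) (1/(4*p)) * y^2) \<le> 1"
proof (cases "p \<le> 1/2")
  case True
  have c: "max (1/2) (1/(4*p)) = 1/(4*p)" using True p by (simp add: field_simps)
  define u where "u = y/(2*p)"
  have "0 \<le> u" "u \<le> 1" using y p unfolding c u_def by (simp_all add: field_simps)
  moreover have "y = 2*p*u" "(1-p)*y/p = 2*(1-p)*u" unfolding u_def using p by (simp_all add: field_simps)
  ultimately show ?thesis unfolding c using two_point_ineq_small[OF p(1) True] by simp
next
  case False
  have c: "max (1/2) (1/(4*p)) = 1/2" using False p by (simp add: field_simps)
  show ?thesis unfolding c using two_point_ineq_large[of p y] False p y c by simp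
qed

lemma sum_exp_quadratic_le_tangent:
  fixes r x :: "'i \<Rightarrow> real" and c C y :: real
  assumes "finite P" and r: "\<And>j. j \<in> P \<Longrightarrow> 0 \<le> r j" "(\<Sum>j\<in>P. r j) = 1"
    and x: "\<And>j. j \<in> P \<Longrightarrow> 0 \<le> x j"
    and c: "1/2 \<le> c" "c \<le> C" and y: "0 \<le> y" "2*c*y \<le> 1"
  shows "(\<Sum>j\<in>P. r j * exp (x j - C * (x j)^2))
           \<le> exp (y - c*y^2) * (1 + (1 - 2*c*y) * ((\<Sum>j\<in>P. r j * x j) - y))"
proof -
  have "(\<Sum>j\<in>P. r j * exp (x j - C * (x j)^2))
      \<le> (\<Sum>j\<in>P. r j * (exp (y - c*y^2) * (1 + (1 - 2*c*y)*(x j - y))))"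
  proof (rule sum_mono)
    fix j assume j: "j \<in> P"
    have "exp (x j - C * (x j)^2) \<le> exp (x j - c * (x j)^2)"
      using c by (simp add: mult_right_mono)
    also have "\<dots> \<le> exp (y - c*y^2) * (1 + (1 - 2*c*y)*(x j - y))"
      using exp_quadratic_le_tangent c y x[OF j] by blast
    finally show "r j * exp (x j - C * (x j)^2) \<le> r j * (exp (y - c*y^2) * (1 + (1 - 2*c*y)*(x j - y)))"
      using r(1)[OF j] by (rule mult_left_mono)
  qed
  also have "\<dots> = exp (y - c*y^2) * ((\<Sum>j\<in>P. r j) + (1 - 2*c*y)*((\<Sum>j\<in>P. r j * x j) - y * (\<Sum>j\<in>P. r j)))"
    by (simp add: sum_distrib_left sum_distrib_right sum.distrib sum_subtractf algebra_simps)
  finally show ?thesis using r(2) by simp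
qed

lemma negative_point_ineq:
  fixes r x :: "'i \<Rightarrow> real" and \<alpha> \<pi> t :: real
  assumes P: "finite P" "\<And>j. j \<in> P \<Longrightarrow> 0 \<le> r j" "(\<Sum>j\<in>P. r j) = 1" "\<And>j. j \<in> P \<Longrightarrow> 0 \<le> x j"
    and \<pi>: "0 < \<pi>" "\<pi> < 1" and \<alpha>: "0 < \<alpha>" "\<alpha> \<le> \<pi>" "\<alpha> \<le> 1/2"
    and t: "0 \<le> t" "\<pi> * t = (1-\<pi>) * (\<Sum>j\<in>P. r j * x j)"
  shows "\<pi> * exp (-t - 1/(4*\<alpha>) * t^2) + (1-\<pi>) * (\<Sum>j\<in>P. r j * exp (x j - 1/(4*\<alpha>) * (x j)^2)) \<le> 1"
proof -
  define C where "C = 1/(4*\<alpha>)"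
  define c where "c = max (1/2) (1/(4*\<pi>))"
  define y where "y = (\<Sum>j\<in>P. r j * x j)"
  define ys where "ys = min y (1/(2*c))"
  have c: "1/2 \<le> c" "c \<le> C" unfolding c_def C_def using \<alpha> \<pi> by (auto simp: field_simps)
  have y0: "0 \<le> y" unfolding y_def using P by (auto intro!: sum_nonneg)
  have ys: "0 \<le> ys" "2*c*ys \<le> 1" "ys \<le> y"
    unfolding ys_def using y0 c by (auto simp: min_def field_simps)
  define ts where "ts = (1-\<pi>)*ys/\<pi>"
  have "(1-\<pi>)*ys \<le> (1-\<pi>)*y" using ys \<pi> by (intro mult_left_mono) auto
  then have "\<pi> * ts \<le> \<pi> * t" unfolding ts_def using t(2) \<pi> by (simp add: y_def)
  then have ts: "0 \<le> ts" "ts \<le> t"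
    using \<pi> ys unfolding ts_def by (auto simp: divide_le_eq mult.commute)
  have "exp (-t - C*t^2) \<le> exp (-ts - c*ts^2)"
    using c ts power_mono[OF ts(2) ts(1), of 2] mult_mono[OF c(2), of "ts^2" "t^2"] by simp
  moreover have "(\<Sum>j\<in>P. r j * exp (x j - C * (x j)^2)) \<le> exp (ys - c*ys^2)"
  proof -
    have "(\<Sum>j\<in>P. r j * exp (x j - C * (x j)^2)) \<le> exp (ys - c*ys^2) * (1 + (1 - 2*c*ys) * (y - ys))"
      unfolding y_def using P c ys(1,2) by (rule sum_exp_quadratic_le_tangent)
    moreover have "ys = y \<or> 1 - 2*c*ys = 0" unfolding ys_def using c by (auto simp: min_def)
    ultimately show ?thesis by auto
  qed
  ultimately have "\<pi> * exp (-t - C*t^2) + (1-\<pi>) * (\<Sum>j\<in>P. r j * exp (x j - C * (x j)^2))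
      \<le> \<pi> * exp (-ts - c*ts^2) + (1-\<pi>) * exp (ys - c*ys^2)"
    using \<pi> by (intro add_mono mult_left_mono) auto
  also have "\<dots> \<le> 1"
    using two_point_ineq[OF \<pi> ys(1)] ys(2) unfolding c_def[symmetric] ts_def by simp
  finally show ?thesis unfolding C_def .
qed

lemma negative_point_ineq_unnormalized:
  fixes p x :: "'i \<Rightarrow> real" and \<alpha> q t :: real
  assumes P: "finite P" "\<And>j. j \<in> P \<Longrightarrow> 0 < p j" "\<And>j. j \<in> P \<Longrightarrow> 0 \<le> x j"
    and m: "0 < (\<Sum>j\<in>P. p j * x j)"
    and q: "\<alpha> \<le> q" "q + (\<Sum>j\<in>P. p j) \<le> 1" "q * t \<le> (\<Sum>j\<in>P. p j * x j)"
    and \<alpha>: "0 < \<alpha>" "\<alpha> \<le> 1/2" and t: "0 < t"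
  shows "q * exp (-t - 1/(4*\<alpha>) * t^2)
      + q * t / (\<Sum>j\<in>P. p j * x j) * (\<Sum>j\<in>P. p j * exp (x j - 1/(4*\<alpha>) * (x j)^2))
    \<le> q + q * t / (\<Sum>j\<in>P. p j * x j) * (\<Sum>j\<in>P. p j)"
proof -
  define m W where "m = (\<Sum>j\<in>P. p j * x j)" and "W = (\<Sum>j\<in>P. p j)"
  define w where "w = q * t / m * W"
  define \<pi> where "\<pi> = q / (q + w)"
  have "P \<noteq> {}" using m by auto
  then have W: "0 < W" unfolding W_def using P by (intro sum_pos) auto
  have q0: "0 < q" using q \<alpha> by simp
  have w: "0 < w" unfolding w_def using q0 t W m m_def by simp
  have qt: "q * t / m \<le> 1" using q(3) m unfolding m_def by simp
  have "w \<le> W" unfolding w_def using mult_right_mono[OF qt, of W] W by simp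
  then have "\<alpha> * (q + w) \<le> \<alpha>" using q(2) \<alpha> W_def by (simp add: mult_left_le)
  then have "\<alpha> \<le> \<pi>" unfolding \<pi>_def using q0 w q(1) by (simp add: le_divide_eq)
  moreover have "0 < \<pi>" "\<pi> < 1" unfolding \<pi>_def using q0 w by (simp_all add: field_simps)
  moreover have "\<pi> * t = (1-\<pi>) * (\<Sum>j\<in>P. p j / W * x j)"
  proof -
    have "(\<Sum>j\<in>P. p j / W * x j) = m / W" unfolding m_def by (simp add: sum_divide_distrib)
    moreover have "1 - \<pi> = w / (q + w)" unfolding \<pi>_def using q0 w by (simp add: field_simps)
    moreover have "w * (m / W) = q * t" unfolding w_def using W m m_def by simp
    ultimately show ?thesis unfolding \<pi>_def by (metis times_divide_eq_left mult.commute)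
  qed
  moreover have "\<And>j. j \<in> P \<Longrightarrow> 0 \<le> p j / W" "(\<Sum>j\<in>P. p j / W) = 1"
    using P(2) W unfolding W_def by (simp_all add: less_imp_le sum_divide_distrib[symmetric])
  ultimately have "\<pi> * exp (-t - 1/(4*\<alpha>) * t^2)
      + (1-\<pi>) * (\<Sum>j\<in>P. p j / W * exp (x j - 1/(4*\<alpha>) * (x j)^2)) \<le> 1"
    using negative_point_ineq[of P "\<lambda>j. p j / W" x \<pi> \<alpha> t] P(1,3) \<alpha> t by simp
  then have "(q + w) * (\<pi> * exp (-t - 1/(4*\<alpha>) * t^2)
      + (1-\<pi>) * (\<Sum>j\<in>P. p j / W * exp (x j - 1/(4*\<alpha>) * (x j)^2))) \<le> (q + w) * 1"
    using q0 w by (intro mult_left_mono) auto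
  moreover have "(q + w) * \<pi> = q" "(q + w) * (1 - \<pi>) = w"
    unfolding \<pi>_def using q0 w by (simp_all add: field_simps)
  ultimately show ?thesis
    unfolding distrib_left mult.assoc[symmetric] m_def[symmetric] W_def[symmetric] w_def
    using W by (simp add: sum_divide_distrib[symmetric])
qed

text \<open>Each negative value \<open>x i\<close> is balanced against a share of the nonnegative values,
  proportional to \<open>p i * (- x i)\<close>, so that every pair has mean zero; the shares add up
  to all of the nonnegative values.\<close>

lemma sum_exp_sub_sq_le_one:
  fixes p x :: "'i \<Rightarrow> real" and \<alpha> :: real
  assumes I: "finite I" and p: "\<And>i. i \<in> I \<Longrightarrow> \<alpha> \<le> p i" "(\<Sum>i\<in>I. p i) = 1"
    and mean: "(\<Sum>i\<in>I. p i * x i) = 0" and \<alpha>: "0 < \<alpha>" "\<alpha> \<le> 1/2"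
  shows "(\<Sum>i\<in>I. p i * exp (x i - 1/(4*\<alpha>) * (x i)^2)) \<le> 1"
proof -
  define g where "g = (\<lambda>i. exp (x i - 1/(4*\<alpha>) * (x i)^2))"
  define N where "N = {i\<in>I. x i < 0}"
  define P where "P = {i\<in>I. 0 \<le> x i}"
  have p0: "\<And>i. i \<in> I \<Longrightarrow> 0 < p i" using p(1) \<alpha> by (meson less_le_trans)
  have NP: "finite N" "finite P" "N \<subseteq> I" "P \<subseteq> I" using I unfolding N_def P_def by auto
  have split: "(\<Sum>i\<in>I. f i) = (\<Sum>i\<in>N. f i) + (\<Sum>i\<in>P. f i)" for f :: "'i \<Rightarrow> real"
  proof -
    have "I = N \<union> P" "N \<inter> P = {}" unfolding N_def P_def by auto
    then show ?thesis using NP by (simp add: sum.union_disjoint)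
  qed
  define m where "m = (\<Sum>j\<in>P. p j * x j)"
  have mN: "(\<Sum>i\<in>N. p i * (- x i)) = m"
    using mean split[of "\<lambda>i. p i * x i"] unfolding m_def by (simp add: sum_negf)
  have pNP: "(\<Sum>i\<in>N. p i) + (\<Sum>j\<in>P. p j) = 1" using p(2) split[of p] by simp
  have pxN: "\<And>i. i \<in> N \<Longrightarrow> 0 < p i * (- x i)" unfolding N_def using p0 by (auto simp: mult_pos_neg)
  show ?thesis
  proof (cases "N = {}")
    case True
    have "(\<Sum>i\<in>I. p i * g i) \<le> (\<Sum>i\<in>I. p i * (1 + x i))"
    proof (rule sum_mono)
      fix i assume i: "i \<in> I"
      then have "g i \<le> 1 + x i"
        using True \<alpha> exp_sub_sq_le_one_plus[of 1 "1/(4*\<alpha>)" "x i"]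
        unfolding g_def N_def by (auto simp: field_simps)
      then show "p i * g i \<le> p i * (1 + x i)" using p0[OF i] by simp
    qed
    also have "\<dots> = 1" using p(2) mean by (simp add: algebra_simps sum.distrib)
    finally show ?thesis unfolding g_def .
  next
    case False
    have "0 < (\<Sum>i\<in>N. p i * (- x i))" using pxN False NP by (intro sum_pos) auto
    then have m0: "0 < m" using mN by simp
    have "p i * g i + p i * (- x i) / m * (\<Sum>j\<in>P. p j * g j)
        \<le> p i + p i * (- x i) / m * (\<Sum>j\<in>P. p j)" if i: "i \<in> N" for i
    proof -
      have "p i + (\<Sum>j\<in>P. p j) \<le> 1" using pNP member_le_sum[of i N p] i NP p0 by force
      moreover have "p i * (- x i) \<le> m"
        using mN member_le_sum[of i N "\<lambda>i. p i * (- x i)"] i NP pxN by (simp add: less_imp_le)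
      moreover have "0 < - x i" using i unfolding N_def by simp
      ultimately have "p i * exp (- (- x i) - 1/(4*\<alpha>) * (- x i)^2)
          + p i * (- x i) / m * (\<Sum>j\<in>P. p j * exp (x j - 1/(4*\<alpha>) * (x j)^2))
        \<le> p i + p i * (- x i) / m * (\<Sum>j\<in>P. p j)"
        unfolding m_def using NP i p(1) p0 m0 \<alpha>
        by (intro negative_point_ineq_unnormalized) (auto simp: P_def m_def)
      then show ?thesis unfolding g_def by simp
    qed
    then have "(\<Sum>i\<in>N. p i * g i + p i * (- x i) / m * (\<Sum>j\<in>P. p j * g j))
        \<le> (\<Sum>i\<in>N. p i + p i * (- x i) / m * (\<Sum>j\<in>P. p j))"
      by (rule sum_mono)
    then have "(\<Sum>i\<in>N. p i * g i) + (\<Sum>i\<in>N. p i * (- x i)) / m * (\<Sum>j\<in>P. p j * g j)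
        \<le> (\<Sum>i\<in>N. p i) + (\<Sum>i\<in>N. p i * (- x i)) / m * (\<Sum>j\<in>P. p j)"
      by (simp only: sum.distrib sum_distrib_right[symmetric] sum_divide_distrib[symmetric])
    then show ?thesis using pNP mN m0 split[of "\<lambda>i. p i * g i"] unfolding g_def by simp
  qed
qed

lemma sum_indicator_disjoint:
  assumes "finite P" "disjoint P"
  shows "(\<Sum>Q\<in>P. indicator Q x) = (indicator (\<Union>P) x :: 'b::{comm_monoid_add,zero_neq_one})"
proof -
  have "indicator (\<Union>(id ` P)) x = (\<Sum>Q\<in>P. indicator (id Q) x :: 'b)"
    using assms by (intro indicator_UN_disjoint) (auto simp: disjoint_family_on_def disjoint_def)
  then show ?thesis by simp
qed

lemma nn_integral_mult_indicator_Union: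
  assumes fin: "finite P" and sub: "P \<subseteq> sets M" and dis: "disjoint P" and h: "h \<in> borel_measurable M"
  shows "(\<integral>\<^sup>+x. h x * indicator (\<Union>P) x \<partial>M) = (\<Sum>Q\<in>P. \<integral>\<^sup>+x. h x * indicator Q x \<partial>M)"
proof -
  have eq: "h x * indicator (\<Union>P) x = (\<Sum>Q\<in>P. h x * indicator Q x)" for x
  proof -
    have "indicator (\<Union>P) x = (\<Sum>Q\<in>P. indicator Q x :: ennreal)"
      using sum_indicator_disjoint[OF fin dis, symmetric] .
    then show ?thesis by (simp add: sum_distrib_left)
  qed
  have "(\<integral>\<^sup>+x. (\<Sum>Q\<in>P. h x * indicator Q x) \<partial>M) = (\<Sum>Q\<in>P. \<integral>\<^sup>+x. h x * indicator Q x \<partial>M)"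
    using sub h fin by (intro nn_integral_sum) auto
  then show ?thesis by (simp only: eq)
qed

lemma nn_integral_mult_indicator_const:
  assumes R: "R \<in> sets M" and h: "\<And>x. x \<in> R \<Longrightarrow> h x = k"
  shows "(\<integral>\<^sup>+x. h x * indicator R x \<partial>M) = k * emeasure M R"
proof -
  have "(\<integral>\<^sup>+x. h x * indicator R x \<partial>M) = (\<integral>\<^sup>+x. k * indicator R x \<partial>M)"
    using h by (intro nn_integral_cong) (auto simp: indicator_def)
  also have "\<dots> = k * emeasure M R" using R by (simp add: nn_integral_cmult_indicator)
  finally show ?thesis .
qed

lemma integrable_indicator_mult:
  fixes g :: "'a \<Rightarrow> real"
  shows "A \<in> sets M \<Longrightarrow> integrable M g \<Longrightarrow> integrable M (\<lambda>y. indicator A y * g y)"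
  using integrable_real_mult_indicator[of A M g] by (simp add: mult.commute)

lemma set_integral_eq_indicator_mult:
  fixes g :: "'a \<Rightarrow> real"
  shows "(\<integral>y\<in>A. g y \<partial>M) = (\<integral>y. indicator A y * g y \<partial>M)"
  unfolding set_lebesgue_integral_def by simp

lemma (in finite_measure) finite_disjoint_family_measure_ge:
  assumes sub: "\<A> \<subseteq> sets M" and dis: "disjoint \<A>" and big: "\<And>A. A \<in> \<A> \<Longrightarrow> e \<le> measure M A"
    and e0: "0 < e"
  shows "finite \<A>"
proof (rule ccontr)
  assume "infinite \<A>"
  define k where "k = nat (ceiling ((measure M (space M) + 1) / e))"
  obtain B where B: "finite B" "card B = k" "B \<subseteq> \<A>" using infinite_arbitrarily_large[OF \<open>infinite \<A>\<close>] by blast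
  have "disjoint B" using dis B(3) by (rule pairwise_subset)
  moreover have "\<And>S. S \<in> B \<Longrightarrow> S \<in> fmeasurable M" using B sub by (auto simp: fmeasurable_def less_top[symmetric])
  ultimately have "measure M (\<Union>B) = (\<Sum>A\<in>B. measure M A)" using B(1) measure_Union' by blast
  also have "\<dots> \<ge> (\<Sum>A\<in>B. e)" using B big by (intro sum_mono) auto
  finally have "real k * e \<le> measure M (space M)" using B bounded_measure[of "\<Union>B"] by simp
  moreover have "measure M (space M) + 1 \<le> real k * e"
  proof -
    have "(measure M (space M) + 1) / e \<le> real k" unfolding k_def by linarith
    then show ?thesis using e0 by (simp add: field_simps)
  qed
  ultimately show False by simp
qed

locale homogeneous_atomic_filtration = prob_space M for M :: "'a measure" +
  fixes F D :: "nat \<Rightarrow> 'a set set" and \<alpha> :: real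
  assumes atomic: "atomic_filtration M F D" and homogeneous: "homogeneous_filtration M D \<alpha>"
    and alpha_pos: "0 < \<alpha>"
begin

lemma sigma_algebra_F: "sigma_algebra (space M) (F n)" and F_sets: "F n \<subseteq> sets M"
  using atomic unfolding atomic_filtration_def by auto

lemma F_Suc: "F n \<subseteq> F (Suc n)" using atomic unfolding atomic_filtration_def by auto

lemma F_mono: "m \<le> n \<Longrightarrow> F m \<subseteq> F n"
  by (rule lift_Suc_mono_le[of F]) (use F_Suc in auto)

lemma F0: "F 0 = {{}, space M}" using atomic unfolding atomic_filtration_def by auto

lemma sets_eq_sigma_F: "sets M = sigma_sets (space M) (\<Union>n. F n)" using atomic unfolding atomic_filtration_def by auto

lemma D_subset_F: "D n \<subseteq> F n" and D_disj: "disjoint (D n)"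
  and F_eq_Union_D: "A \<in> F n \<Longrightarrow> \<exists>C\<subseteq>D n. A = \<Union>C"
  using atomic unfolding atomic_filtration_def by auto

lemma D_sets: "Q \<in> D n \<Longrightarrow> Q \<in> sets M" using D_subset_F F_sets by blast

lemma D_subset_space: "Q \<in> D n \<Longrightarrow> Q \<subseteq> space M" using D_sets sets.sets_into_space by blast

lemma space_in_F: "space M \<in> F n" using sigma_algebra_F[of n] by (meson algebra.top sigma_algebra.axioms(1))

lemma D_disjoint: "Q \<in> D n \<Longrightarrow> R \<in> D n \<Longrightarrow> Q \<noteq> R \<Longrightarrow> Q \<inter> R = {}"
  using D_disj unfolding disjoint_def by blast

lemma F_covered_by_D: "A \<in> F n \<Longrightarrow> x \<in> A \<Longrightarrow> \<exists>Q\<in>D n. x \<in> Q \<and> Q \<subseteq> A"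
  using F_eq_Union_D by blast

lemma ex1_cube: "x \<in> space M \<Longrightarrow> \<exists>!Q. Q \<in> D n \<and> x \<in> Q"
proof -
  assume x: "x \<in> space M"
  obtain Q where "Q \<in> D n" "x \<in> Q" using F_covered_by_D[OF space_in_F x] by blast
  moreover have "R = Q" if "R \<in> D n" "x \<in> R" for R
    using D_disjoint[of R n Q] that \<open>Q \<in> D n\<close> \<open>x \<in> Q\<close> by blast
  ultimately show ?thesis by blast
qed

definition cube :: "nat \<Rightarrow> 'a \<Rightarrow> 'a set" where
  "cube n x = (THE Q. Q \<in> D n \<and> x \<in> Q)"

lemma cube_in_D: "x \<in> space M \<Longrightarrow> cube n x \<in> D n" and in_cube: "x \<in> space M \<Longrightarrow> x \<in> cube n x"
  unfolding cube_def using theI'[OF ex1_cube] by blast+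

lemma cube_eq: "x \<in> space M \<Longrightarrow> Q \<in> D n \<Longrightarrow> x \<in> Q \<Longrightarrow> cube n x = Q"
  using ex1_cube cube_in_D in_cube by blast

lemma cube_subset_F: "A \<in> F m \<Longrightarrow> m \<le> n \<Longrightarrow> x \<in> space M \<Longrightarrow> x \<in> A \<Longrightarrow> cube n x \<subseteq> A"
proof -
  assume A: "A \<in> F m" "m \<le> n" "x \<in> space M" "x \<in> A"
  then have "A \<in> F n" using F_mono by blast
  then obtain Q where "Q \<in> D n" "x \<in> Q" "Q \<subseteq> A" using F_covered_by_D A by blast
  then show ?thesis using cube_eq A by blast
qed

lemma cube_disjoint_F: "A \<in> F m \<Longrightarrow> m \<le> n \<Longrightarrow> x \<in> space M \<Longrightarrow> x \<notin> A \<Longrightarrow> cube n x \<inter> A = {}"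
proof (rule ccontr)
  assume A: "A \<in> F m" "m \<le> n" "x \<in> space M" "x \<notin> A" "cube n x \<inter> A \<noteq> {}"
  then obtain y where y: "y \<in> cube n x" "y \<in> A" by blast
  have ys: "y \<in> space M" using y D_subset_space cube_in_D A(3) by blast
  have "cube n y = cube n x" using cube_eq[OF ys cube_in_D[OF A(3)] y(1)] .
  moreover have "cube n y \<subseteq> A" using cube_subset_F[OF A(1,2) ys y(2)] .
  ultimately show False using in_cube[OF A(3)] A(4) by blast
qed

lemma cube_mono: "m \<le> n \<Longrightarrow> x \<in> space M \<Longrightarrow> cube n x \<subseteq> cube m x"
  using cube_subset_F[of "cube m x" m n x] cube_in_D in_cube D_subset_F by blast

lemma cube_eq_of_in_cube: "m \<le> n \<Longrightarrow> x \<in> space M \<Longrightarrow> y \<in> cube n x \<Longrightarrow> cube m y = cube m x"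
proof -
  assume a: "m \<le> n" "x \<in> space M" "y \<in> cube n x"
  have ys: "y \<in> space M" using a D_subset_space cube_in_D by blast
  have "y \<in> cube m x" using cube_mono[OF a(1,2)] a(3) by blast
  then show ?thesis using cube_eq[OF ys cube_in_D[OF a(2)]] by simp
qed

lemma cube0: "x \<in> space M \<Longrightarrow> cube 0 x = space M"
  using cube_in_D[of x 0] in_cube[of x 0] D_subset_F[of 0] F0 by auto

lemma cube_Suc_in_children: "x \<in> space M \<Longrightarrow> cube (Suc n) x \<in> cube_children D n (cube n x)"
  unfolding cube_children_def using cube_in_D cube_mono[of n "Suc n" x] by auto

lemma measure_cube_ge: "x \<in> space M \<Longrightarrow> \<alpha>^n \<le> measure M (cube n x)"
proof (induction n)
  case 0 then show ?case using cube0 by (simp add: prob_space)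
next
  case (Suc n)
  have "\<alpha> * measure M (cube n x) \<le> measure M (cube (Suc n) x)"
    using homogeneous cube_Suc_in_children[OF Suc.prems] cube_in_D[OF Suc.prems] unfolding homogeneous_filtration_def by blast
  moreover have "\<alpha> * \<alpha>^n \<le> \<alpha> * measure M (cube n x)" using Suc alpha_pos by simp
  ultimately show ?case by simp
qed

lemma measure_cube_pos: "x \<in> space M \<Longrightarrow> 0 < measure M (cube n x)"
  using measure_cube_ge[of x n] alpha_pos by (meson less_le_trans zero_less_power)

lemma measure_D_ge: "Q \<in> D n \<Longrightarrow> Q \<noteq> {} \<Longrightarrow> \<alpha>^n \<le> measure M Q"
proof -
  assume Q: "Q \<in> D n" "Q \<noteq> {}"
  then obtain x where x: "x \<in> Q" by blast
  then have xs: "x \<in> space M" using D_subset_space Q by blast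
  show ?thesis using measure_cube_ge[OF xs, of n] cube_eq[OF xs Q(1) x] by simp
qed

lemma D_Suc_nonempty: "R \<in> D (Suc n) \<Longrightarrow> R \<noteq> {}"
proof
  assume R: "R \<in> D (Suc n)" "R = {}"
  obtain x where x: "x \<in> space M" using not_empty by blast
  have "R \<in> cube_children D n (cube n x)" unfolding cube_children_def using R by simp
  then have "\<alpha> * measure M (cube n x) \<le> measure M R"
    using homogeneous cube_in_D[OF x] unfolding homogeneous_filtration_def by blast
  moreover have "0 < \<alpha> * measure M (cube n x)" using alpha_pos measure_cube_pos[OF x] by simp
  ultimately show False using R by simp
qed

lemma measure_D_pos: "Q \<in> D n \<Longrightarrow> Q \<noteq> {} \<Longrightarrow> 0 < measure M Q"
  using measure_D_ge[of Q n] alpha_pos by (meson less_le_trans zero_less_power)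

lemma child_in_D: "R \<in> cube_children D n Q \<Longrightarrow> R \<in> D (Suc n) \<and> R \<subseteq> Q \<and> R \<noteq> {}"
  unfolding cube_children_def using D_Suc_nonempty by auto

lemma D_finite: "finite (D n)"
proof (cases n)
  case 0 then show ?thesis using D_subset_F[of 0] F0 by (simp add: finite_subset)
next
  case (Suc m)
  have "\<alpha>^n \<le> measure M R" if "R \<in> D n" for R using measure_D_ge[OF that] D_Suc_nonempty that Suc by blast
  then show ?thesis
    using finite_disjoint_family_measure_ge[of "D n" "\<alpha>^n"] D_sets D_disj alpha_pos by auto
qed

lemma children_finite: "finite (cube_children D n Q)"
  unfolding cube_children_def using D_finite by simp

lemma Union_children: "Q \<in> D n \<Longrightarrow> \<Union>(cube_children D n Q) = Q"
proof
  assume Q: "Q \<in> D n"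
  show "\<Union>(cube_children D n Q) \<subseteq> Q" unfolding cube_children_def by auto
  show "Q \<subseteq> \<Union>(cube_children D n Q)"
  proof
    fix x assume x: "x \<in> Q"
    then have xs: "x \<in> space M" using D_subset_space Q by blast
    have "cube n x = Q" using cube_eq[OF xs Q x] .
    then show "x \<in> \<Union>(cube_children D n Q)" using cube_Suc_in_children[OF xs] in_cube[OF xs] by blast
  qed
qed

lemma Union_D: "\<Union>(D n) = space M"
  using D_subset_space cube_in_D in_cube by blast

lemma nn_integral_sum_D:
  assumes h: "h \<in> borel_measurable M"
  shows "(\<integral>\<^sup>+x. h x \<partial>M) = (\<Sum>Q\<in>D n. \<integral>\<^sup>+x. h x * indicator Q x \<partial>M)"
proof -
  have "(\<integral>\<^sup>+x. h x \<partial>M) = (\<integral>\<^sup>+x. h x * indicator (\<Union>(D n)) x \<partial>M)"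
    by (intro nn_integral_cong) (simp add: Union_D)
  also have "\<dots> = (\<Sum>Q\<in>D n. \<integral>\<^sup>+x. h x * indicator Q x \<partial>M)"
    using nn_integral_mult_indicator_Union[OF D_finite _ D_disj h] D_sets by blast
  finally show ?thesis .
qed

lemma disjoint_children: "disjoint (cube_children D n Q)"
  using D_disj[of "Suc n"] unfolding cube_children_def disjoint_def by blast

lemma children_sets: "cube_children D n Q \<subseteq> sets M"
  unfolding cube_children_def using D_sets by blast

lemma nn_integral_sum_children:
  assumes Q: "Q \<in> D n" and h: "h \<in> borel_measurable M"
  shows "(\<integral>\<^sup>+x. h x * indicator Q x \<partial>M) = (\<Sum>R\<in>cube_children D n Q. \<integral>\<^sup>+x. h x * indicator R x \<partial>M)"
proof -
  have "(\<integral>\<^sup>+x. h x * indicator Q x \<partial>M) = (\<integral>\<^sup>+x. h x * indicator (\<Union>(cube_children D n Q)) x \<partial>M)"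
    using Union_children[OF Q] by simp
  also have "\<dots> = (\<Sum>R\<in>cube_children D n Q. \<integral>\<^sup>+x. h x * indicator R x \<partial>M)"
    by (rule nn_integral_mult_indicator_Union[OF children_finite children_sets disjoint_children h])
  finally show ?thesis .
qed

lemma measure_sum_children: "Q \<in> D n \<Longrightarrow> measure M Q = (\<Sum>R\<in>cube_children D n Q. measure M R)"
proof -
  assume Q: "Q \<in> D n"
  have fm: "\<And>S. S \<in> cube_children D n Q \<Longrightarrow> S \<in> fmeasurable M"
    using children_sets by (auto simp: fmeasurable_def less_top[symmetric])
  show ?thesis using measure_Union'[OF children_finite fm disjoint_children[of n Q]] Union_children[OF Q] by simp
qed

lemma set_integral_sum_children:
  fixes g :: "'a \<Rightarrow> real"
  assumes Q: "Q \<in> D n" and g: "integrable M g"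
  shows "(\<integral>x\<in>Q. g x \<partial>M) = (\<Sum>R\<in>cube_children D n Q. (\<integral>x\<in>R. g x \<partial>M))"
proof -
  have pw: "indicator Q x * g x = (\<Sum>R\<in>cube_children D n Q. indicator R x * g x)" for x
  proof -
    have "(\<Sum>R\<in>cube_children D n Q. indicator R x :: real) = indicator (\<Union>(cube_children D n Q)) x"
      by (rule sum_indicator_disjoint[OF children_finite disjoint_children])
    then have "indicator Q x = (\<Sum>R\<in>cube_children D n Q. indicator R x :: real)"
      using Union_children[OF Q] by simp
    then show ?thesis by (simp add: sum_distrib_right)
  qed
  have "(\<integral>x\<in>Q. g x \<partial>M) = (\<integral>x. (\<Sum>R\<in>cube_children D n Q. indicator R x * g x) \<partial>M)"
    unfolding set_integral_eq_indicator_mult pw ..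
  also have "\<dots> = (\<Sum>R\<in>cube_children D n Q. (\<integral>x. indicator R x * g x \<partial>M))"
    using children_sets g by (intro Bochner_Integration.integral_sum integrable_indicator_mult) auto
  also have "\<dots> = (\<Sum>R\<in>cube_children D n Q. (\<integral>x\<in>R. g x \<partial>M))"
    unfolding set_integral_eq_indicator_mult ..
  finally show ?thesis .
qed

lemma integrable_indicator: "A \<in> sets M \<Longrightarrow> integrable M (indicator A :: 'a \<Rightarrow> real)"
  by (intro integrable_real_indicator) (auto simp: less_top[symmetric] emeasure_finite)

definition avg :: "nat \<Rightarrow> ('a \<Rightarrow> real) \<Rightarrow> 'a \<Rightarrow> real" where
  "avg n g x = cube_avg M (cube n x) g"

lemma avg_on_cube: "Q \<in> D N \<Longrightarrow> x \<in> Q \<Longrightarrow> avg N g x = cube_avg M Q g"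
  unfolding avg_def using cube_eq D_subset_space by blast

lemma avg_eq_sum: "x \<in> space M \<Longrightarrow> avg n g x = (\<Sum>Q\<in>D n. cube_avg M Q g * indicator Q x)"
proof -
  assume x: "x \<in> space M"
  have "(\<Sum>Q\<in>D n. cube_avg M Q g * indicator Q x) = cube_avg M (cube n x) g * indicator (cube n x) x
       + (\<Sum>Q\<in>D n - {cube n x}. cube_avg M Q g * indicator Q x)"
    by (subst sum.remove[OF D_finite cube_in_D[OF x]]) (rule refl)
  moreover have "(\<Sum>Q\<in>D n - {cube n x}. cube_avg M Q g * indicator Q x) = 0"
  proof (rule sum.neutral, rule ballI)
    fix Q assume "Q \<in> D n - {cube n x}"
    then have "x \<notin> Q" using cube_eq[OF x] by blast
    then show "cube_avg M Q g * indicator Q x = 0" by simp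
  qed
  ultimately show ?thesis using in_cube[OF x] unfolding avg_def by simp
qed

lemma borel_measurable_avg[measurable]: "avg n g \<in> borel_measurable M"
proof -
  have "(\<lambda>x. \<Sum>Q\<in>D n. cube_avg M Q g * indicator Q x) \<in> borel_measurable M"
    using D_sets by (intro borel_measurable_sum borel_measurable_times) auto
  then show ?thesis using avg_eq_sum by (subst measurable_cong) auto
qed

lemma integrable_avg: "integrable M (avg n g)"
proof -
  have "integrable M (\<lambda>x. cube_avg M Q g * indicator Q x)" if "Q \<in> D n" for Q
    using integrable_indicator[OF D_sets[OF that]] by (rule integrable_mult_right)
  then have "integrable M (\<lambda>x. \<Sum>Q\<in>D n. cube_avg M Q g * indicator Q x)"
    by (intro Bochner_Integration.integrable_sum) auto
  then show ?thesis using avg_eq_sum by (subst Bochner_Integration.integrable_cong[OF refl]) auto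
qed

lemma avg_eq: "x \<in> space M \<Longrightarrow> avg n g x = (\<integral>y\<in>cube n x. g y \<partial>M) / measure M (cube n x)"
  unfolding avg_def cube_avg_def using measure_cube_pos by simp

lemma avg_cong_cube:
  assumes "\<And>y. y \<in> cube n x \<Longrightarrow> g y = h y"
  shows "avg n g x = avg n h x"
proof -
  have "(\<integral>y. indicator (cube n x) y * g y \<partial>M) = (\<integral>y. indicator (cube n x) y * h y \<partial>M)"
  proof (rule Bochner_Integration.integral_cong[OF refl])
    fix y show "indicator (cube n x) y * g y = indicator (cube n x) y * h y"
      using assms by (cases "y \<in> cube n x") auto
  qed
  then show ?thesis unfolding avg_def cube_avg_def set_integral_eq_indicator_mult by simp
qed

lemma avg_cong: "(\<And>y. y \<in> space M \<Longrightarrow> g y = h y) \<Longrightarrow> x \<in> space M \<Longrightarrow> avg n g x = avg n h x"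
  by (rule avg_cong_cube) (use D_subset_space cube_in_D in blast)

lemma avg_add:
  assumes g: "integrable M g" and h: "integrable M h" and x: "x \<in> space M"
  shows "avg n (\<lambda>y. g y + h y) x = avg n g x + avg n h x"
proof -
  have s: "cube n x \<in> sets M" using cube_in_D[OF x] D_sets by blast
  have "(\<integral>y. indicator (cube n x) y * (g y + h y) \<partial>M)
      = (\<integral>y. indicator (cube n x) y * g y + indicator (cube n x) y * h y \<partial>M)"
    by (simp add: distrib_left)
  also have "\<dots> = (\<integral>y. indicator (cube n x) y * g y \<partial>M) + (\<integral>y. indicator (cube n x) y * h y \<partial>M)"
    by (rule Bochner_Integration.integral_add[OF integrable_indicator_mult[OF s g] integrable_indicator_mult[OF s h]])
  finally show ?thesis unfolding avg_eq[OF x] set_integral_eq_indicator_mult by (simp add: add_divide_distrib)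
qed

lemma avg_cmult:
  assumes x: "x \<in> space M"
  shows "avg n (\<lambda>y. c * g y) x = c * avg n g x"
  unfolding avg_eq[OF x] set_integral_eq_indicator_mult by (simp add: algebra_simps)

lemma avg_const: "x \<in> space M \<Longrightarrow> avg n (\<lambda>y. c) x = c"
proof -
  assume x: "x \<in> space M"
  have s: "cube n x \<in> sets M" using cube_in_D[OF x] D_sets by blast
  have "(\<integral>y\<in>cube n x. c \<partial>M) = measure M (cube n x) * c"
    using set_integral_const[OF s, of c] emeasure_finite[of "cube n x"] by simp
  moreover have "0 < measure M (cube n x)" by (rule measure_cube_pos[OF x])
  ultimately show ?thesis unfolding avg_eq[OF x] by simp
qed

lemma avg_indicator_F:
  assumes A: "A \<in> F m" and mn: "m \<le> n" and x: "x \<in> space M"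
  shows "avg n (indicator A) x = indicator A x"
proof (cases "x \<in> A")
  case True
  then have sub: "cube n x \<subseteq> A" using cube_subset_F[OF A mn x] by blast
  have "avg n (indicator A) x = avg n (\<lambda>y. 1) x"
    by (rule avg_cong_cube) (use sub in auto)
  then show ?thesis using avg_const[OF x] True by simp
next
  case False
  then have dj: "cube n x \<inter> A = {}" using cube_disjoint_F[OF A mn x] by blast
  have "avg n (indicator A) x = avg n (\<lambda>y. 0) x"
    by (rule avg_cong_cube) (use dj in \<open>auto simp: indicator_def\<close>)
  then show ?thesis using avg_const[OF x] False by simp
qed

lemma avg_diff:
  assumes g: "integrable M g" and h: "integrable M h" and x: "x \<in> space M"
  shows "avg n g x - avg n h x = avg n (\<lambda>y. g y - h y) x"
proof -
  have "avg n g x = avg n (\<lambda>y. (g y - h y) + h y) x" by simp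
  also have "\<dots> = avg n (\<lambda>y. g y - h y) x + avg n h x"
    using g h x by (intro avg_add) auto
  finally show ?thesis by simp
qed

lemma nn_integral_abs_avg_cube_le:
  assumes Q: "Q \<in> D n" and g: "integrable M g"
  shows "(\<integral>\<^sup>+x. ennreal \<bar>avg n g x\<bar> * indicator Q x \<partial>M) \<le> (\<integral>\<^sup>+x. ennreal \<bar>g x\<bar> * indicator Q x \<partial>M)"
proof (cases "Q = {}")
  case False
  have "(\<integral>\<^sup>+x. ennreal \<bar>avg n g x\<bar> * indicator Q x \<partial>M) = ennreal \<bar>cube_avg M Q g\<bar> * emeasure M Q"
    using avg_on_cube[OF Q] by (intro nn_integral_mult_indicator_const[OF D_sets[OF Q]]) simp
  also have "\<dots> = ennreal \<bar>\<integral>y. indicator Q y * g y \<partial>M\<bar>"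
    using measure_D_pos[OF Q False]
    by (simp add: emeasure_eq_measure ennreal_mult[symmetric] cube_avg_def set_integral_eq_indicator_mult abs_div)
  also have "\<dots> \<le> (\<integral>\<^sup>+y. norm (indicator Q y * g y) \<partial>M)"
    using integral_norm_bound_ennreal[OF integrable_indicator_mult[OF D_sets[OF Q] g]] by simp
  also have "\<dots> = (\<integral>\<^sup>+x. ennreal \<bar>g x\<bar> * indicator Q x \<partial>M)"
    by (intro nn_integral_cong) (auto simp: indicator_def)
  finally show ?thesis .
qed simp

lemma nn_integral_abs_avg_le:
  assumes g: "integrable M g"
  shows "(\<integral>\<^sup>+x. ennreal \<bar>avg n g x\<bar> \<partial>M) \<le> (\<integral>\<^sup>+x. ennreal \<bar>g x\<bar> \<partial>M)"
proof -
  have [measurable]: "g \<in> borel_measurable M" using g by auto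
  have "(\<integral>\<^sup>+x. ennreal \<bar>avg n g x\<bar> \<partial>M) = (\<Sum>Q\<in>D n. \<integral>\<^sup>+x. ennreal \<bar>avg n g x\<bar> * indicator Q x \<partial>M)"
    by (rule nn_integral_sum_D) measurable
  also have "\<dots> \<le> (\<Sum>Q\<in>D n. \<integral>\<^sup>+x. ennreal \<bar>g x\<bar> * indicator Q x \<partial>M)"
    using nn_integral_abs_avg_cube_le[OF _ g] by (rule sum_mono)
  also have "\<dots> = (\<integral>\<^sup>+x. ennreal \<bar>g x\<bar> \<partial>M)"
    by (rule nn_integral_sum_D[symmetric]) measurable
  finally show ?thesis .
qed

definition avg_error :: "nat \<Rightarrow> ('a \<Rightarrow> real) \<Rightarrow> ennreal" where
  "avg_error n g = (\<integral>\<^sup>+x. ennreal \<bar>avg n g x - g x\<bar> \<partial>M)"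

lemma avg_error_triangle:
  assumes g: "integrable M g" and h: "integrable M h"
  shows "avg_error n g \<le> avg_error n h + 2 * (\<integral>\<^sup>+x. ennreal \<bar>g x - h x\<bar> \<partial>M)"
proof -
  have [measurable]: "g \<in> borel_measurable M" "h \<in> borel_measurable M" using g h by auto
  have gh: "integrable M (\<lambda>y. g y - h y)" using g h by auto
  have "avg_error n g \<le> (\<integral>\<^sup>+x. ennreal \<bar>avg n h x - h x\<bar> + ennreal \<bar>avg n (\<lambda>y. g y - h y) x\<bar> + ennreal \<bar>g x - h x\<bar> \<partial>M)"
    unfolding avg_error_def
  proof (rule nn_integral_mono)
    fix x assume x: "x \<in> space M"
    have "\<bar>avg n g x - g x\<bar> \<le> \<bar>avg n h x - h x\<bar> + \<bar>avg n g x - avg n h x\<bar> + \<bar>g x - h x\<bar>" by simp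
    then have "\<bar>avg n g x - g x\<bar> \<le> \<bar>avg n h x - h x\<bar> + \<bar>avg n (\<lambda>y. g y - h y) x\<bar> + \<bar>g x - h x\<bar>"
      using avg_diff[OF g h x] by simp
    then show "ennreal \<bar>avg n g x - g x\<bar> \<le> ennreal \<bar>avg n h x - h x\<bar> + ennreal \<bar>avg n (\<lambda>y. g y - h y) x\<bar> + ennreal \<bar>g x - h x\<bar>"
      by (simp add: ennreal_plus[symmetric] del: ennreal_plus)
  qed
  also have "\<dots> = avg_error n h + (\<integral>\<^sup>+x. ennreal \<bar>avg n (\<lambda>y. g y - h y) x\<bar> \<partial>M) + (\<integral>\<^sup>+x. ennreal \<bar>g x - h x\<bar> \<partial>M)"
    unfolding avg_error_def by (simp add: nn_integral_add)
  also have "\<dots> \<le> avg_error n h + (\<integral>\<^sup>+x. ennreal \<bar>g x - h x\<bar> \<partial>M) + (\<integral>\<^sup>+x. ennreal \<bar>g x - h x\<bar> \<partial>M)"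
    using nn_integral_abs_avg_le[OF gh, of n] by (intro add_mono) auto
  finally show ?thesis by (simp add: mult_2 add.assoc)
qed

lemma avg_error_cong:
  assumes gh: "\<And>y. y \<in> space M \<Longrightarrow> g y = h y"
  shows "avg_error n g = avg_error n h"
  unfolding avg_error_def
proof (rule nn_integral_cong)
  fix x assume x: "x \<in> space M"
  have "avg n g x = avg n h x" using avg_cong[OF gh x] .
  then show "ennreal \<bar>avg n g x - g x\<bar> = ennreal \<bar>avg n h x - h x\<bar>" using gh[OF x] by simp
qed

lemma avg_error_add:
  assumes g: "integrable M g" and h: "integrable M h"
  shows "avg_error n (\<lambda>y. g y + h y) \<le> avg_error n g + avg_error n h"
proof -
  have [measurable]: "g \<in> borel_measurable M" "h \<in> borel_measurable M" using g h by auto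
  have "avg_error n (\<lambda>y. g y + h y) \<le> (\<integral>\<^sup>+x. ennreal \<bar>avg n g x - g x\<bar> + ennreal \<bar>avg n h x - h x\<bar> \<partial>M)"
    unfolding avg_error_def
  proof (rule nn_integral_mono)
    fix x assume x: "x \<in> space M"
    have "\<bar>avg n (\<lambda>y. g y + h y) x - (g x + h x)\<bar> \<le> \<bar>avg n g x - g x\<bar> + \<bar>avg n h x - h x\<bar>"
      using avg_add[OF g h x] by simp
    then show "ennreal \<bar>avg n (\<lambda>y. g y + h y) x - (g x + h x)\<bar> \<le> ennreal \<bar>avg n g x - g x\<bar> + ennreal \<bar>avg n h x - h x\<bar>"
      by (simp add: ennreal_plus[symmetric] del: ennreal_plus)
  qed
  also have "\<dots> = avg_error n g + avg_error n h" unfolding avg_error_def by (simp add: nn_integral_add)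
  finally show ?thesis .
qed

lemma avg_error_cmult: "integrable M g \<Longrightarrow> avg_error n (\<lambda>y. c * g y) = ennreal \<bar>c\<bar> * avg_error n g"
proof -
  assume "integrable M g"
  then have [measurable]: "g \<in> borel_measurable M" by auto
  have "avg_error n (\<lambda>y. c * g y) = (\<integral>\<^sup>+x. ennreal \<bar>c\<bar> * ennreal \<bar>avg n g x - g x\<bar> \<partial>M)"
    unfolding avg_error_def
  proof (intro nn_integral_cong)
    fix x assume x: "x \<in> space M"
    show "ennreal \<bar>avg n (\<lambda>y. c * g y) x - c * g x\<bar> = ennreal \<bar>c\<bar> * ennreal \<bar>avg n g x - g x\<bar>"
      using avg_cmult[OF x] by (simp add: ennreal_mult[symmetric] abs_mult[symmetric] right_diff_distrib)
  qed
  also have "\<dots> = ennreal \<bar>c\<bar> * avg_error n g" unfolding avg_error_def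
    by (rule nn_integral_cmult) measurable
  finally show ?thesis .
qed

definition avg_converges :: "('a \<Rightarrow> real) \<Rightarrow> bool" where
  "avg_converges g \<longleftrightarrow> (\<lambda>n. avg_error n g) \<longlonglongrightarrow> 0"

lemma avg_converges_approx:
  assumes g: "integrable M g"
    and ap: "\<And>e. 0 < e \<Longrightarrow> \<exists>h. integrable M h \<and> avg_converges h \<and> (\<integral>\<^sup>+x. ennreal \<bar>g x - h x\<bar> \<partial>M) < ennreal e"
  shows "avg_converges g"
  unfolding avg_converges_def
proof (rule order_tendstoI)
  fix a :: ennreal assume "a < 0" then show "eventually (\<lambda>n. a < avg_error n g) sequentially" by simp
next
  fix u :: ennreal assume u: "0 < u"
  obtain z where z: "0 < z" "z < u" using dense[OF u] by blast
  define r where "r = enn2real z"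
  have zt: "z < top" using z(2) top_greatest[of u] by (rule order.strict_trans2)
  have zr: "z = ennreal r" unfolding r_def using zt by simp
  have r0: "0 < r" using z zr by simp
  define e where "e = r/4"
  have e0: "0 < e" unfolding e_def using r0 by simp
  obtain h where h: "integrable M h" "avg_converges h" "(\<integral>\<^sup>+x. ennreal \<bar>g x - h x\<bar> \<partial>M) < ennreal e"
    using ap[OF e0] by blast
  have "eventually (\<lambda>n. avg_error n h < ennreal e) sequentially"
  proof -
    have "(\<lambda>n. avg_error n h) \<longlonglongrightarrow> 0" using h(2) unfolding avg_converges_def .
    moreover have "(0::ennreal) < ennreal e" using e0 by simp
    ultimately show ?thesis by (rule order_tendstoD(2))
  qed
  then show "eventually (\<lambda>n. avg_error n g < u) sequentially"
  proof (rule eventually_mono)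
    fix n assume Ln: "avg_error n h < ennreal e"
    have "avg_error n g \<le> avg_error n h + 2 * (\<integral>\<^sup>+x. ennreal \<bar>g x - h x\<bar> \<partial>M)" by (rule avg_error_triangle[OF g h(1)])
    also have "\<dots> \<le> ennreal e + 2 * ennreal e"
      using Ln h(3) by (intro add_mono mult_left_mono) auto
    also have "\<dots> = ennreal (3 * e)"
    proof -
      have "ennreal (3 * e) = ennreal e + ennreal (2 * e)" using e0 by (simp flip: ennreal_plus)
      then show ?thesis using e0 by (simp add: ennreal_mult)
    qed
    also have "\<dots> < ennreal r" using r0 unfolding e_def by (simp add: ennreal_less_iff)
    also have "\<dots> < u" using z zr by simp
    finally show "avg_error n g < u" .
  qed
qed

lemma avg_converges_add:
  assumes "avg_converges g" "avg_converges h" "integrable M g" "integrable M h"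
  shows "avg_converges (\<lambda>y. g y + h y)"
  unfolding avg_converges_def
proof (rule tendsto_sandwich[where f="\<lambda>n. 0" and h="\<lambda>n. avg_error n g + avg_error n h"])
  show "eventually (\<lambda>n. 0 \<le> avg_error n (\<lambda>y. g y + h y)) sequentially" by simp
  show "eventually (\<lambda>n. avg_error n (\<lambda>y. g y + h y) \<le> avg_error n g + avg_error n h) sequentially"
    using avg_error_add assms by simp
  show "(\<lambda>n. 0::ennreal) \<longlonglongrightarrow> 0" by simp
  show "(\<lambda>n. avg_error n g + avg_error n h) \<longlonglongrightarrow> 0"
    using tendsto_add[of "\<lambda>n. avg_error n g" 0 sequentially "\<lambda>n. avg_error n h" 0] assms unfolding avg_converges_def by simp
qed

lemma avg_converges_cmult:
  assumes "integrable M g" "avg_converges g"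
  shows "avg_converges (\<lambda>y. c * g y)"
proof -
  have "(\<lambda>n. ennreal \<bar>c\<bar> * avg_error n g) \<longlonglongrightarrow> ennreal \<bar>c\<bar> * 0"
    using assms(2) unfolding avg_converges_def by (intro ennreal_tendsto_cmult) auto
  then show ?thesis unfolding avg_converges_def using avg_error_cmult[OF assms(1)] by simp
qed

lemma avg_converges_cong: "(\<And>y. y \<in> space M \<Longrightarrow> g y = h y) \<Longrightarrow> avg_converges g \<longleftrightarrow> avg_converges h"
  unfolding avg_converges_def using avg_error_cong by (metis (no_types, lifting) ext)

lemma avg_converges_indicator_F:
  assumes A: "A \<in> F m"
  shows "avg_converges (indicator A)"
  unfolding avg_converges_def
proof (rule tendsto_eventually)
  show "eventually (\<lambda>n. avg_error n (indicator A) = 0) sequentially"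
    unfolding eventually_sequentially
  proof (intro exI allI impI)
    fix n assume mn: "m \<le> n"
    show "avg_error n (indicator A) = 0" unfolding avg_error_def
      using avg_indicator_F[OF A mn] by (subst nn_integral_cong[where v="\<lambda>x. 0"]) auto
  qed
qed

lemma Int_stable_F: "Int_stable (\<Union>n. F n)"
  unfolding Int_stable_def
proof (intro ballI)
  fix a b assume a: "a \<in> (\<Union>n. F n)" and b: "b \<in> (\<Union>n. F n)"
  then obtain m k where m: "a \<in> F m" and k: "b \<in> F k" by blast
  interpret S: sigma_algebra "space M" "F (max m k)" by (rule sigma_algebra_F)
  have "a \<in> F (max m k)" using m F_mono[of m "max m k"] by auto
  moreover have "b \<in> F (max m k)" using k F_mono[of k "max m k"] by auto
  ultimately
  show "a \<inter> b \<in> (\<Union>n. F n)" using S.Int by blast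
qed

lemma Union_F_subset_Pow: "(\<Union>n. F n) \<subseteq> Pow (space M)"
  using F_sets sets.space_closed by blast

lemma avg_converges_indicator_finite_Union:
  fixes A :: "nat \<Rightarrow> 'a set"
  assumes A: "disjoint_family A" "\<And>i. A i \<in> sets M" "\<And>i. avg_converges (indicator (A i))"
  shows "avg_converges (indicator (\<Union>i<K. A i))"
proof (induction K)
  case 0
  have "avg_converges (indicator {})" using F0 by (intro avg_converges_indicator_F[of _ 0]) simp
  then show ?case by (simp only: lessThan_0 UN_empty)
next
  case (Suc K)
  have "A K \<inter> A i = {}" if "i < K" for i using A(1) that unfolding disjoint_family_on_def by simp
  then have "A K \<inter> (\<Union>i<K. A i) = {}" by blast
  then have "indicator (\<Union>i<Suc K. A i) = (\<lambda>y. indicator (\<Union>i<K. A i) y + indicator (A K) y :: real)"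
    by (auto simp: lessThan_Suc indicator_disj_union)
  moreover have "avg_converges (\<lambda>y. indicator (\<Union>i<K. A i) y + indicator (A K) y)"
    using Suc A by (intro avg_converges_add integrable_indicator) auto
  ultimately show ?case by simp
qed

lemma avg_converges_indicator_Union:
  fixes A :: "nat \<Rightarrow> 'a set"
  assumes A: "disjoint_family A" "\<And>i. A i \<in> sets M" "\<And>i. avg_converges (indicator (A i))"
  shows "avg_converges (indicator (\<Union>i. A i))"
proof (rule avg_converges_approx[OF integrable_indicator])
  define U where "U = (\<Union>i. A i)"
  define V where "V K = (\<Union>i<K. A i)" for K
  have sets: "U \<in> sets M" "V K \<in> sets M" for K unfolding U_def V_def using A(2) by auto
  then show "(\<Union>i. A i) \<in> sets M" unfolding U_def by simp
  have VU: "V K \<subseteq> U" for K unfolding V_def U_def by auto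
  have "incseq V" unfolding V_def incseq_def by (auto simp: subset_eq)
  moreover have "(\<Union>K. V K) = U" unfolding V_def U_def by (auto intro: lessThan_iff[THEN iffD2, OF lessI])
  ultimately have lim: "(\<lambda>K. measure M (V K)) \<longlonglongrightarrow> measure M U"
    using finite_Lim_measure_incseq[of V] sets by auto
  fix e :: real assume e: "0 < e"
  obtain K where K: "measure M U - e < measure M (V K)"
    using order_tendstoD(1)[OF lim, of "measure M U - e"] e eventually_sequentially by auto
  have "(\<integral>\<^sup>+x. ennreal \<bar>indicator U x - indicator (V K) x\<bar> \<partial>M) = (\<integral>\<^sup>+x. indicator (U - V K) x \<partial>M)"
    using VU[of K] by (intro nn_integral_cong) (auto simp: indicator_def)
  also have "\<dots> = emeasure M (U - V K)" using sets by simp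
  also have "\<dots> = ennreal (measure M U - measure M (V K))"
    using sets VU[of K] by (simp add: emeasure_eq_measure measure_Diff)
  also have "\<dots> < ennreal e" using K e by (simp add: ennreal_lessI)
  finally show "\<exists>h. integrable M h \<and> avg_converges h \<and> (\<integral>\<^sup>+x. ennreal \<bar>indicator (\<Union>i. A i) x - h x\<bar> \<partial>M) < ennreal e"
    using integrable_indicator[OF sets(2)] avg_converges_indicator_finite_Union[OF A, of K]
    unfolding U_def V_def by blast
qed

lemma avg_converges_indicator:
  assumes "A \<in> sets M"
  shows "avg_converges (indicator A)"
proof -
  have "A \<in> sigma_sets (space M) (\<Union>n. F n)" using assms sets_eq_sigma_F by simp
  from Int_stable_F Union_F_subset_Pow this show ?thesis
  proof (induction rule: sigma_sets_induct_disjoint)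
    case (basic A)
    then show ?case using avg_converges_indicator_F by blast
  next
    case empty
    have "{} \<in> F 0" using F0 by simp
    then show ?case by (rule avg_converges_indicator_F)
  next
    case (compl A)
    have A: "A \<in> sets M" using compl.hyps sets_eq_sigma_F by simp
    have "avg_converges (indicator (space M))" using space_in_F[of 0] by (rule avg_converges_indicator_F)
    moreover have "avg_converges (\<lambda>y. (-1) * indicator A y)"
      using integrable_indicator[OF A] compl.IH by (rule avg_converges_cmult)
    ultimately have "avg_converges (\<lambda>y. indicator (space M) y + (-1) * indicator A y)"
      using integrable_indicator[OF A] by (intro avg_converges_add integrable_indicator) auto
    then show ?case by (rule avg_converges_cong[THEN iffD1, rotated]) (auto simp: indicator_def)
  next
    case (union A)
    then show ?case using sets_eq_sigma_F by (intro avg_converges_indicator_Union) auto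
  qed
qed

lemma avg_converges_integrable:
  assumes "integrable M g"
  shows "avg_converges g"
  using assms
proof (induction rule: integrable_induct)
  case (base A c)
  have "avg_converges (\<lambda>y. c * indicator A y)" using integrable_indicator[OF base(1)] avg_converges_indicator[OF base(1)] by (rule avg_converges_cmult)
  then show ?case by (subst avg_converges_cong[where h="\<lambda>y. c * indicator A y"]) auto
next
  case (add f g)
  then show ?case by (intro avg_converges_add) auto
next
  case (lim f s)
  have [measurable]: "f \<in> borel_measurable M" using lim(4) by auto
  have sm[measurable]: "\<And>i. s i \<in> borel_measurable M" using lim(1) by auto
  have conv: "(\<lambda>i. (\<integral>\<^sup>+x. norm (f x - s i x) \<partial>M)) \<longlonglongrightarrow> 0"
  proof (rule nn_integral_dominated_convergence_norm[where w="\<lambda>x. 2 * norm (f x)"])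
    show "\<And>j. AE x in M. norm (s j x) \<le> 2 * norm (f x)" using lim(3) by auto
    have "(\<integral>\<^sup>+x. ennreal (2 * norm (f x)) \<partial>M) = 2 * (\<integral>\<^sup>+x. ennreal (norm (f x)) \<partial>M)"
      by (subst nn_integral_cmult[symmetric]) (auto simp: ennreal_mult)
    also have "\<dots> < \<infinity>" using lim(4) unfolding integrable_iff_bounded by (simp add: ennreal_mult_less_top)
    finally show "(\<integral>\<^sup>+x. ennreal (2 * norm (f x)) \<partial>M) < \<infinity>" .
    show "AE x in M. (\<lambda>i. s i x) \<longlonglongrightarrow> f x" using lim(2) by auto
  qed measurable
  show ?case
  proof (rule avg_converges_approx[OF lim(4)])
    fix e :: real assume e0: "0 < e"
    have "eventually (\<lambda>i. (\<integral>\<^sup>+x. norm (f x - s i x) \<partial>M) < ennreal e) sequentially"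
      using conv e0 by (intro order_tendstoD(2)) auto
    then obtain i where i: "(\<integral>\<^sup>+x. norm (f x - s i x) \<partial>M) < ennreal e"
      by (auto simp: eventually_sequentially)
    then show "\<exists>h. integrable M h \<and> avg_converges h \<and> (\<integral>\<^sup>+x. ennreal \<bar>f x - h x\<bar> \<partial>M) < ennreal e"
      using lim(1,5) by auto
  qed
qed

lemma tendsto_L1_avg:
  assumes g: "integrable M g"
  shows "(\<lambda>n. (\<integral>x. norm (avg n g x - g x) \<partial>M)) \<longlonglongrightarrow> 0"
proof -
  have int: "integrable M (\<lambda>x. avg n g x - g x)" for n using integrable_avg g by auto
  have eq: "ennreal (\<integral>x. norm (avg n g x - g x) \<partial>M) = avg_error n g" for n
    unfolding avg_error_def using int[of n] by (subst nn_integral_eq_integral) auto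
  have "(\<lambda>n. ennreal (\<integral>x. norm (avg n g x - g x) \<partial>M)) \<longlonglongrightarrow> 0"
    unfolding eq using avg_converges_integrable[OF g] unfolding avg_converges_def .
  then show ?thesis by (subst ennreal_tendsto_0_iff[symmetric]) auto
qed

lemma avg_eq_on_cube: "Q \<in> D N \<Longrightarrow> x \<in> Q \<Longrightarrow> x0 \<in> Q \<Longrightarrow> n \<le> N \<Longrightarrow> avg n g x = avg n g x0"
proof -
  assume a: "Q \<in> D N" "x \<in> Q" "x0 \<in> Q" "n \<le> N"
  have x0s: "x0 \<in> space M" using a D_subset_space by blast
  have "cube N x0 = Q" using cube_eq[OF x0s a(1,3)] .
  then have "cube n x = cube n x0" using cube_eq_of_in_cube[OF a(4) x0s] a(2) by simp
  then show ?thesis unfolding avg_def by simp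
qed

definition exp_supermart :: "('a \<Rightarrow> real) \<Rightarrow> nat \<Rightarrow> 'a \<Rightarrow> real" where
  "exp_supermart g N x = exp (avg N g x - avg 0 g x - (1/(4*\<alpha>)) * (\<Sum>n<N. (avg (Suc n) g x - avg n g x)^2))"

lemma borel_measurable_exp_supermart[measurable]: "exp_supermart g N \<in> borel_measurable M"
  unfolding exp_supermart_def by measurable

lemma exp_supermart_Suc: "exp_supermart g (Suc N) x = exp_supermart g N x * exp ((avg (Suc N) g x - avg N g x) - (1/(4*\<alpha>)) * (avg (Suc N) g x - avg N g x)^2)"
proof -
  have "avg (Suc N) g x - avg 0 g x - (1/(4*\<alpha>)) * (\<Sum>n<Suc N. (avg (Suc n) g x - avg n g x)^2)
      = (avg N g x - avg 0 g x - (1/(4*\<alpha>)) * (\<Sum>n<N. (avg (Suc n) g x - avg n g x)^2))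
        + ((avg (Suc N) g x - avg N g x) - (1/(4*\<alpha>)) * (avg (Suc N) g x - avg N g x)^2)"
    by (simp add: algebra_simps)
  then show ?thesis by (simp only: exp_supermart_def exp_add)
qed

lemma exp_supermart_eq_on_cube: "Q \<in> D N \<Longrightarrow> x \<in> Q \<Longrightarrow> x0 \<in> Q \<Longrightarrow> exp_supermart g N x = exp_supermart g N x0"
proof -
  assume a: "Q \<in> D N" "x \<in> Q" "x0 \<in> Q"
  have "avg n g x = avg n g x0" if "n \<le> N" for n using avg_eq_on_cube[OF a that] .
  moreover have "(\<Sum>n<N. (avg (Suc n) g x - avg n g x)^2) = (\<Sum>n<N. (avg (Suc n) g x0 - avg n g x0)^2)"
    using avg_eq_on_cube[OF a] by (intro sum.cong) auto
  ultimately show ?thesis unfolding exp_supermart_def by simp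
qed

lemma sum_children_avg_increment:
  assumes Q: "Q \<in> D n" "Q \<noteq> {}" and f: "integrable M f"
  shows "(\<Sum>R\<in>cube_children D n Q. measure M R * (cube_avg M R f - cube_avg M Q f)) = 0"
proof -
  have "measure M R * cube_avg M R f = (\<integral>x\<in>R. f x \<partial>M)" if "R \<in> cube_children D n Q" for R
    using measure_D_pos[of R "Suc n"] child_in_D[OF that] unfolding cube_avg_def by simp
  then have "(\<Sum>R\<in>cube_children D n Q. measure M R * cube_avg M R f) = (\<integral>x\<in>Q. f x \<partial>M)"
    using set_integral_sum_children[OF Q(1) f] by simp
  moreover have "(\<Sum>R\<in>cube_children D n Q. measure M R) * cube_avg M Q f = (\<integral>x\<in>Q. f x \<partial>M)"
    using measure_D_pos[OF Q] unfolding measure_sum_children[OF Q(1), symmetric] cube_avg_def by simp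
  ultimately show ?thesis
    by (simp add: right_diff_distrib sum_subtractf sum_distrib_right)
qed

lemma nn_integral_exp_supermart_Suc_cube:
  assumes Q: "Q \<in> D N" and x0: "x0 \<in> Q"
  shows "(\<integral>\<^sup>+x. ennreal (exp_supermart f (Suc N) x) * indicator Q x \<partial>M)
    = ennreal (exp_supermart f N x0 * (\<Sum>R\<in>cube_children D N Q. measure M R *
        exp ((cube_avg M R f - cube_avg M Q f) - (1/(4*\<alpha>)) * (cube_avg M R f - cube_avg M Q f)^2)))"
proof -
  define e where "e R = exp ((cube_avg M R f - cube_avg M Q f) - (1/(4*\<alpha>)) * (cube_avg M R f - cube_avg M Q f)^2)"
    for R
  have "(\<integral>\<^sup>+x. ennreal (exp_supermart f (Suc N) x) * indicator R x \<partial>M) = ennreal (exp_supermart f N x0 * e R) * emeasure M R"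
    if R: "R \<in> cube_children D N Q" for R
  proof (rule nn_integral_mult_indicator_const)
    show "R \<in> sets M" using child_in_D[OF R] D_sets by blast
    fix x assume x: "x \<in> R"
    then have "x \<in> Q" using child_in_D[OF R] by blast
    then show "ennreal (exp_supermart f (Suc N) x) = ennreal (exp_supermart f N x0 * e R)"
      using exp_supermart_eq_on_cube[OF Q _ x0] avg_on_cube[OF Q] avg_on_cube[OF conjunct1[OF child_in_D[OF R]] x]
      unfolding exp_supermart_Suc e_def by simp
  qed
  then have "(\<integral>\<^sup>+x. ennreal (exp_supermart f (Suc N) x) * indicator Q x \<partial>M)
      = (\<Sum>R\<in>cube_children D N Q. ennreal (exp_supermart f N x0 * e R * measure M R))"
    using nn_integral_sum_children[OF Q, of "\<lambda>x. ennreal (exp_supermart f (Suc N) x)"]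
    by (simp add: emeasure_eq_measure exp_supermart_def e_def ennreal_mult[symmetric])
  also have "\<dots> = ennreal (\<Sum>R\<in>cube_children D N Q. exp_supermart f N x0 * e R * measure M R)"
    by (intro sum_ennreal) (simp add: exp_supermart_def e_def)
  finally show ?thesis by (simp add: e_def sum_distrib_left mult_ac)
qed

lemma nn_integral_exp_supermart_Suc_le:
  assumes f: "integrable M f" and \<alpha>: "\<alpha> \<le> 1/2"
  shows "(\<integral>\<^sup>+x. ennreal (exp_supermart f (Suc N) x) \<partial>M) \<le> (\<integral>\<^sup>+x. ennreal (exp_supermart f N x) \<partial>M)"
proof -
  have "(\<integral>\<^sup>+x. ennreal (exp_supermart f (Suc N) x) * indicator Q x \<partial>M)
      \<le> (\<integral>\<^sup>+x. ennreal (exp_supermart f N x) * indicator Q x \<partial>M)" if Q: "Q \<in> D N" for Q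
  proof (cases "Q = {}")
    case False
    then obtain x0 where x0: "x0 \<in> Q" by blast
    define mQ where "mQ = measure M Q"
    have mQ: "0 < mQ" unfolding mQ_def using measure_D_pos[OF Q False] .
    define \<delta> where "\<delta> R = cube_avg M R f - cube_avg M Q f" for R
    define S where "S = (\<Sum>R\<in>cube_children D N Q. measure M R * exp (\<delta> R - (1/(4*\<alpha>)) * (\<delta> R)^2))"
    have "(\<Sum>R\<in>cube_children D N Q. measure M R / mQ * exp (\<delta> R - 1/(4*\<alpha>) * (\<delta> R)^2)) \<le> 1"
    proof (rule sum_exp_sub_sq_le_one[OF children_finite _ _ _ alpha_pos \<alpha>])
      show "\<alpha> \<le> measure M R / mQ" if "R \<in> cube_children D N Q" for R
        using homogeneous Q that mQ unfolding homogeneous_filtration_def mQ_def by (simp add: le_divide_eq)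
      show "(\<Sum>R\<in>cube_children D N Q. measure M R / mQ) = 1"
        using measure_sum_children[OF Q] mQ unfolding mQ_def by (simp add: sum_divide_distrib[symmetric])
      show "(\<Sum>R\<in>cube_children D N Q. measure M R / mQ * \<delta> R) = 0"
        using sum_children_avg_increment[OF Q False f] unfolding \<delta>_def
        by (simp add: sum_divide_distrib[symmetric])
    qed
    then have "S \<le> mQ" unfolding S_def using mQ by (simp add: sum_divide_distrib[symmetric] divide_le_eq)
    then have "exp_supermart f N x0 * S \<le> exp_supermart f N x0 * mQ" by (simp add: exp_supermart_def)
    moreover have "(\<integral>\<^sup>+x. ennreal (exp_supermart f N x) * indicator Q x \<partial>M) = ennreal (exp_supermart f N x0 * mQ)"
      using exp_supermart_eq_on_cube[OF Q _ x0]
      by (subst nn_integral_mult_indicator_const[OF D_sets[OF Q]])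
        (auto simp: mQ_def emeasure_eq_measure ennreal_mult exp_supermart_def)
    ultimately show ?thesis
      unfolding nn_integral_exp_supermart_Suc_cube[OF Q x0] S_def \<delta>_def by (simp add: ennreal_leI)
  qed simp
  then show ?thesis
    using nn_integral_sum_D[of "\<lambda>x. ennreal (exp_supermart f (Suc N) x)" N]
      nn_integral_sum_D[of "\<lambda>x. ennreal (exp_supermart f N x)" N]
    by (simp add: sum_mono)
qed

lemma nn_integral_exp_supermart_le_1:
  assumes "integrable M f" "\<alpha> \<le> 1/2"
  shows "(\<integral>\<^sup>+x. ennreal (exp_supermart f N x) \<partial>M) \<le> 1"
proof (induction N)
  case 0
  have "(\<integral>\<^sup>+x. ennreal (exp_supermart f 0 x) \<partial>M) = (\<integral>\<^sup>+x. 1 \<partial>M)" unfolding exp_supermart_def by simp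
  then show ?case using emeasure_space_1 by simp
next
  case (Suc N)
  then show ?case using nn_integral_exp_supermart_Suc_le[OF assms, of N] by simp
qed

lemma cube_Delta_cube:
  assumes x: "x \<in> space M"
  shows "cube_Delta M D n (cube n x) g x = avg (Suc n) g x - avg n g x"
proof -
  define R0 where "R0 = cube (Suc n) x"
  have R0ch: "R0 \<in> cube_children D n (cube n x)" unfolding R0_def by (rule cube_Suc_in_children[OF x])
  have "(\<Sum>\<^sub>\<infinity>R\<in>cube_children D n (cube n x). cube_E M R g x) = (\<Sum>\<^sub>\<infinity>R\<in>{R0}. cube_E M R g x)"
  proof (rule infsum_cong_neutral)
    fix R assume "R \<in> {R0} - cube_children D n (cube n x)"
    then show "cube_E M R g x = 0" using R0ch by simp
  next
    fix R assume R: "R \<in> cube_children D n (cube n x) - {R0}"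
    then have "R \<in> D (Suc n)" "R \<noteq> R0" unfolding cube_children_def by auto
    then have "x \<notin> R" using cube_eq[OF x] unfolding R0_def by blast
    then show "cube_E M R g x = 0" unfolding cube_E_def by simp
  qed simp
  also have "\<dots> = cube_E M R0 g x" by simp
  also have "\<dots> = avg (Suc n) g x" unfolding cube_E_def avg_def R0_def using in_cube[OF x] by simp
  finally show ?thesis unfolding cube_Delta_def cube_E_def avg_def using in_cube[OF x] by simp
qed

lemma sum_sq_avg_increments_le:
  assumes x: "x \<in> space M"
  shows "(\<Sum>n<N. ennreal ((avg (Suc n) g x - avg n g x)^2)) \<le> square_fun_sq M D g x"
proof -
  define K where "K = (\<lambda>n. (n, cube n x)) ` {..<N}"
  define h where "h = (\<lambda>(n, Q). ennreal ((cube_Delta M D n Q g x)\<^sup>2))"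
  have KS: "K \<subseteq> Sigma UNIV D" unfolding K_def using cube_in_D[OF x] by auto
  have "(\<Sum>n<N. ennreal ((avg (Suc n) g x - avg n g x)^2)) = (\<Sum>n<N. h (n, cube n x))"
    unfolding h_def using cube_Delta_cube[OF x] by simp
  also have "\<dots> = sum h K" unfolding K_def by (subst sum.reindex) (auto simp: inj_on_def)
  also have "\<dots> = infsum h K" unfolding K_def by simp
  also have "\<dots> \<le> infsum h (Sigma UNIV D)"
    using KS by (intro infsum_mono_neutral nonneg_summable_on_complete) auto
  finally show ?thesis unfolding square_fun_sq_def h_def .
qed

lemma AE_sum_sq_avg_increments_le:
  assumes fin: "esssup M (square_fun M D g) < \<top>"
  shows "AE x in M. (\<Sum>n<N. (avg (Suc n) g x - avg n g x)^2) \<le> (enn2real (esssup M (square_fun M D g)))^2"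
  using esssup_AE[of "square_fun M D g" M]
proof (rule AE_mp, intro AE_I2 impI)
  fix x assume x: "x \<in> space M" and le: "square_fun M D g x \<le> esssup M (square_fun M D g)"
  define S where "S = esssup M (square_fun M D g)"
  define s where "s = enn2real S"
  define q where "q = square_fun_sq M D g x"
  have St: "S \<noteq> \<top>" using fin unfolding S_def by simp
  have s0: "0 \<le> s" unfolding s_def by simp
  have Ss: "S = ennreal s" unfolding s_def using St by (simp add: ennreal_enn2real_if)
  have qt: "q \<noteq> \<top>"
  proof
    assume "q = \<top>"
    then have "square_fun M D g x = \<top>" unfolding square_fun_def q_def by simp
    with le St show False unfolding S_def by (simp add: top_unique)
  qed
  have "ennreal (sqrt (enn2real q)) \<le> ennreal s"
    using le qt unfolding square_fun_def q_def[symmetric] S_def[symmetric] Ss by simp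
  then have "sqrt (enn2real q) \<le> s" using s0 by (simp add: ennreal_le_iff)
  then have qs: "enn2real q \<le> s^2"
    by (metis enn2real_nonneg real_sqrt_le_iff real_sqrt_unique s0 sqrt_le_D)
  have "ennreal (\<Sum>n<N. (avg (Suc n) g x - avg n g x)^2) = (\<Sum>n<N. ennreal ((avg (Suc n) g x - avg n g x)^2))"
    by (rule sum_ennreal[symmetric]) simp
  also have "\<dots> \<le> q" unfolding q_def by (rule sum_sq_avg_increments_le[OF x])
  also have "\<dots> = ennreal (enn2real q)" using qt by (simp add: ennreal_enn2real_if)
  finally have "(\<Sum>n<N. (avg (Suc n) g x - avg n g x)^2) \<le> enn2real q"
    by (simp add: ennreal_le_iff)
  with qs show "(\<Sum>n<N. (avg (Suc n) g x - avg n g x)^2) \<le> (enn2real (esssup M (square_fun M D g)))^2"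
    unfolding s_def S_def by simp
qed

lemma avg_0: "integrable M g \<Longrightarrow> x \<in> space M \<Longrightarrow> avg 0 g x = (\<integral>y. g y \<partial>M)"
  unfolding avg_eq cube0 using set_integral_space by (simp add: prob_space)

lemma AE_exp_avg_le_exp_supermart:
  assumes f: "integrable M f" and S: "esssup M (square_fun M D f) < \<top>"
  shows "AE x in M. exp (avg N f x - (\<integral>y. f y \<partial>M))
    \<le> exp_supermart f N x * exp ((enn2real (esssup M (square_fun M D f)))\<^sup>2 / (4 * \<alpha>))"
  using AE_sum_sq_avg_increments_le[OF S, of N]
proof (rule AE_mp, intro AE_I2 impI)
  fix x assume x: "x \<in> space M"
    and le: "(\<Sum>n<N. (avg (Suc n) f x - avg n f x)^2) \<le> (enn2real (esssup M (square_fun M D f)))^2"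
  define V where "V = (\<Sum>n<N. (avg (Suc n) f x - avg n f x)^2)"
  have "exp (avg N f x - (\<integral>y. f y \<partial>M)) = exp_supermart f N x * exp (V / (4 * \<alpha>))"
    unfolding exp_supermart_def V_def avg_0[OF f x, symmetric] by (simp add: exp_add[symmetric])
  also have "\<dots> \<le> exp_supermart f N x * exp ((enn2real (esssup M (square_fun M D f)))\<^sup>2 / (4 * \<alpha>))"
    using le alpha_pos unfolding V_def by (auto simp: exp_supermart_def divide_right_mono)
  finally show "exp (avg N f x - (\<integral>y. f y \<partial>M))
    \<le> exp_supermart f N x * exp ((enn2real (esssup M (square_fun M D f)))\<^sup>2 / (4 * \<alpha>))" .
qed

lemma nn_integral_exp_avg_le:
  assumes f: "integrable M f" and S: "esssup M (square_fun M D f) < \<top>" and \<alpha>: "\<alpha> \<le> 1/2"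
  shows "(\<integral>\<^sup>+x. ennreal (exp (avg N f x - (\<integral>y. f y \<partial>M))) \<partial>M)
    \<le> ennreal (exp ((enn2real (esssup M (square_fun M D f)))\<^sup>2 / (4 * \<alpha>)))"
proof -
  define B where "B = exp ((enn2real (esssup M (square_fun M D f)))\<^sup>2 / (4 * \<alpha>))"
  have "0 \<le> B" unfolding B_def by simp
  have "AE x in M. ennreal (exp (avg N f x - (\<integral>y. f y \<partial>M))) \<le> ennreal (exp_supermart f N x) * ennreal B"
    using AE_exp_avg_le_exp_supermart[OF f S, of N] unfolding B_def[symmetric]
    by eventually_elim (simp add: ennreal_mult[symmetric] ennreal_leI \<open>0 \<le> B\<close> exp_supermart_def)
  then have "(\<integral>\<^sup>+x. ennreal (exp (avg N f x - (\<integral>y. f y \<partial>M))) \<partial>M)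
      \<le> (\<integral>\<^sup>+x. ennreal (exp_supermart f N x) * ennreal B \<partial>M)"
    by (rule nn_integral_mono_AE)
  also have "\<dots> = (\<integral>\<^sup>+x. ennreal (exp_supermart f N x) \<partial>M) * ennreal B"
    by (rule nn_integral_multc) measurable
  also have "\<dots> \<le> ennreal B"
    using nn_integral_exp_supermart_le_1[OF f \<alpha>, of N] by (metis mult_1 mult_right_mono zero_le)
  finally show ?thesis unfolding B_def .
qed

lemma AE_subseq_avg_tendsto:
  assumes f: "integrable M f"
  obtains r where "strict_mono r" "AE x in M. (\<lambda>n. avg (r n) f x) \<longlonglongrightarrow> f x"
proof -
  have "\<exists>r. strict_mono r \<and> (AE x in M. (\<lambda>n. avg (r n) f x - f x) \<longlonglongrightarrow> 0)"
    using f integrable_avg tendsto_L1_avg[OF f] by (intro tendsto_L1_AE_subseq) auto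
  then obtain r where r: "strict_mono r" "AE x in M. (\<lambda>n. avg (r n) f x - f x) \<longlonglongrightarrow> 0" by blast
  from r(2) have "AE x in M. (\<lambda>n. avg (r n) f x) \<longlonglongrightarrow> f x"
  proof eventually_elim
    case (elim x)
    then show ?case using tendsto_add[OF elim tendsto_const[of "f x"]] by simp
  qed
  with r(1) show ?thesis by (rule that)
qed

end

theorem theorem2p2:
  fixes M :: "'a measure" and F D :: "nat \<Rightarrow> 'a set set"
    and \<alpha> :: real and f :: "'a \<Rightarrow> real"
  assumes "prob_space M"
    and "atomic_filtration M F D"
    and "homogeneous_filtration M D \<alpha>"
    and "0 < \<alpha>" and "\<alpha> \<le> 1/2"
    and "integrable M f"
    and "esssup M (square_fun M D f) < \<top>"
  shows "(\<integral>\<^sup>+x. ennreal (exp (f x - (\<integral>y. f y \<partial>M))) \<partial>M)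
           \<le> ennreal (exp ((enn2real (esssup M (square_fun M D f)))\<^sup>2 / (4 * \<alpha>)))"
proof -
  interpret homogeneous_atomic_filtration M F D \<alpha>
    using assms(1-4) by (simp add: homogeneous_atomic_filtration_def homogeneous_atomic_filtration_axioms_def)
  define E where "E = (\<integral>y. f y \<partial>M)"
  obtain r where r: "AE x in M. (\<lambda>n. avg (r n) f x) \<longlonglongrightarrow> f x"
    using AE_subseq_avg_tendsto[OF assms(6)] by blast
  have "(\<integral>\<^sup>+x. ennreal (exp (f x - E)) \<partial>M) = (\<integral>\<^sup>+x. liminf (\<lambda>n. ennreal (exp (avg (r n) f x - E))) \<partial>M)"
    using r by (intro nn_integral_cong_AE)
      (auto elim!: AE_mp intro!: lim_imp_Liminf[symmetric] tendsto_ennrealI tendsto_intros)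
  also have "\<dots> \<le> liminf (\<lambda>n. \<integral>\<^sup>+x. ennreal (exp (avg (r n) f x - E)) \<partial>M)"
    by (rule nn_integral_liminf) measurable
  also have "\<dots> \<le> ennreal (exp ((enn2real (esssup M (square_fun M D f)))\<^sup>2 / (4 * \<alpha>)))"
    using nn_integral_exp_avg_le[OF assms(6,7,5)] unfolding E_def
    by (intro Liminf_le always_eventually allI) simp_all
  finally show ?thesis unfolding E_def .
qed

end
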